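(* Fix integers $2\le r\le k$, let $u(n)$ satisfy $u(n)\to\infty$, $u(n)/n\to0$, and let $m=\lfloor\mu n^{r-1}/u(n)^{r-2}\rfloor$ for a constant $\mu>0$. Then for any constants $\tau>0$ and $\lambda\in\mathbb R$, $$\mathbb E\bigl[\exp\{\lambda\,\underline{E}(\lfloor\tau u(n)\rfloor)\}\bigr]=\exp\Bigl\{\varphi_{k,r}(\mu,\lambda,\tau)\,u(n)+O\bigl(\max\{1,u(n)^2/n\}\bigr)\Bigr\}.$$
   Context: Let $N(t):=n-u(n)-t$ and $p_j(n):=\binom{n-u(n)}{j}\binom{u(n)}{k-j}/\binom{n}{k}$ for $j=0,\dots,k$. Let $(C_0,\dots,C_k)$ have the multinomial distribution with $m$ trials and cell probabilities $p_0(n),\dots,p_k(n)$. The Markov chain $(\underline{E}(t),\underline{C}_{k-r+2}(t),\dots,\underline{C}_k(t))_{t\ge0}$ starts at $\underline{E}(0)=\sum_{j=1}^{k-r+1}jC_j$, $\underline{C}_j(0)=C_j$ for $k-r+2\le j\le k$, and evolves by $\underline{C}_k(t+1)=\underline{C}_k(t)-\underline{R}_k(t)$; $\underline{C}_j(t+1)=\underline{C}_j(t)-\underline{R}_j(t)+\underline{R}_{j+1}(t)$ for $k-r+2\le j\le k-1$; $\underline{E}(t+1)=\underline{E}(t)-1-\underline{R}'(t)+(k-r+1)\underline{R}_{k-r+2}(t)$, where, conditionally on the state at time $t$, the variables are independent with $\underline{R}_j(t)\sim\mathrm{Binom}(\underline{C}_j(t),\,j/N(t))$ for $k-r+2\le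 j\le k$ and $\underline{R}'(t)\sim\mathrm{Binom}(\underline{E}(t)+t,\,1/(N(t)-k+r))$. $\varphi_{k,r}(\mu,\lambda,\tau):=\mu\bigl(e^{(k-r+1)\lambda}-1\bigr)\binom{k}{r-1}(1+\tau)^{r-1}-\lambda\tau$. *)

theory Defs
  imports "HOL-Probability.Probability" "HOL-Library.Landau_Symbols"
begin

(* Binomial distribution; the success probability is clamped to [0,1]
   (only relevant for small n, where the chain's parameters may leave [0,1]). *)
definition binom :: "nat \<Rightarrow> real \<Rightarrow> nat pmf" where
  "binom N p = binomial_pmf N (min 1 (max 0 p))"

definition categorical :: "nat \<Rightarrow> (nat \<Rightarrow> real) \<Rightarrow> nat pmf" where
  "categorical k p = embed_pmf (\<lambda>j. if j \<le> k then p j else 0)"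

fun multinomial :: "nat \<Rightarrow> (nat \<Rightarrow> real) \<Rightarrow> nat \<Rightarrow> (nat \<Rightarrow> nat) pmf" where
  "multinomial k p 0 = return_pmf (\<lambda>_. 0)"
| "multinomial k p (Suc m) =
     bind_pmf (multinomial k p m) (\<lambda>C. bind_pmf (categorical k p) (\<lambda>j. return_pmf (C(j := C j + 1))))"

definition pj :: "nat \<Rightarrow> (nat \<Rightarrow> nat) \<Rightarrow> nat \<Rightarrow> nat \<Rightarrow> real" where
  "pj k u n j = real ((n - u n) choose j) * real (u n choose (k - j)) / real (n choose k)"

definition NN :: "(nat \<Rightarrow> nat) \<Rightarrow> nat \<Rightarrow> nat \<Rightarrow> real" where
  "NN u n t = real n - real (u n) - real t"

fun rbinoms :: "(nat \<Rightarrow> nat) \<Rightarrow> nat \<Rightarrow> nat \<Rightarrow> (nat \<Rightarrow> nat) \<Rightarrow> nat list \<Rightarrow> (nat \<Rightarrow> nat) pmf" where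
  "rbinoms u n t c [] = return_pmf (\<lambda>_. 0)"
| "rbinoms u n t c (j # js) =
     bind_pmf (rbinoms u n t c js)
       (\<lambda>R. bind_pmf (binom (c j) (real j / NN u n t)) (\<lambda>x. return_pmf (R(j := x))))"

(* one step of the chain from time t to t+1; state (E, C) with C j meaningful for k-r+2 \<le> j \<le> k *)
definition chain_step :: "nat \<Rightarrow> nat \<Rightarrow> (nat \<Rightarrow> nat) \<Rightarrow> nat \<Rightarrow> nat \<Rightarrow> int \<times> (nat \<Rightarrow> nat) \<Rightarrow> (int \<times> (nat \<Rightarrow> nat)) pmf" where
  "chain_step k r u n t s =
     (case s of (e, c) \<Rightarrow>
       bind_pmf (rbinoms u n t c [k - r + 2 ..< k + 1]) (\<lambda>R.
       bind_pmf (binom (nat (e + int t)) (1 / (NN u n t - real k + real r))) (\<lambda>R'.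
         return_pmf
           (e - 1 - int R' + int (k - r + 1) * int (R (k - r + 2)),
            \<lambda>j. if k - r + 2 \<le> j \<and> j \<le> k then c j - R j + R (j + 1) else 0))))"

definition chain_init :: "nat \<Rightarrow> nat \<Rightarrow> (nat \<Rightarrow> nat) \<Rightarrow> nat \<Rightarrow> nat \<Rightarrow> (int \<times> (nat \<Rightarrow> nat)) pmf" where
  "chain_init k r u n m =
     map_pmf (\<lambda>C. (int (\<Sum>j = 1..k - r + 1. j * C j),
                   \<lambda>j. if k - r + 2 \<le> j \<and> j \<le> k then C j else 0))
             (multinomial k (pj k u n) m)"

fun chain :: "nat \<Rightarrow> nat \<Rightarrow> (nat \<Rightarrow> nat) \<Rightarrow> nat \<Rightarrow> nat \<Rightarrow> nat \<Rightarrow> (int \<times> (nat \<Rightarrow> nat)) pmf" where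
  "chain k r u n m 0 = chain_init k r u n m"
| "chain k r u n m (Suc t) = bind_pmf (chain k r u n m t) (chain_step k r u n t)"

definition phi :: "nat \<Rightarrow> nat \<Rightarrow> real \<Rightarrow> real \<Rightarrow> real \<Rightarrow> real" where
  "phi k r \<mu> lam \<tau> = \<mu> * (exp (real (k - r + 1) * lam) - 1) * real (k choose (r - 1)) * (1 + \<tau>) ^ (r - 1) - lam * \<tau>"

end

theory Submission
  imports Defs
begin

(*
  The chain is driven by independent binomial thinnings, so the exponential tilt
  exp(b E + sum_j a_j C_j) of the state at time t+1 has conditional expectation equal to a
  deterministic factor times a tilt of the state at time t, with parameters (b', a') given
  by an explicit backward recursion.  Iterating this from T = floor(tau u) down to 0 and
  using the multinomial MGF at time 0 yields the exact formula
     E exp(lam E(T)) = P * Y ^ m,   P = product of the step factors,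
                                    Y = sum_j p_j exp(theta_j)
  (lemma exact_mgf_formula).  The asymptotic analysis then shows, with x = u/n and L = k-r+1:
  the b-parameter stays within O(x) of lam, hence ln P = -lam tau u + O(1 + u^2/n); the
  a-parameter a_{L+i} equals (e^{L lam}-1) (L+1)^(i rising) binom(S,i) / n^i up to a relative
  error O(x); with the asymptotics of m p_{L+i} this gives
     m (Y - 1) = mu (e^{L lam}-1) binom(k,r-1) (1+tau)^(r-1) u + O(1 + u^2/n),
  and m ln Y = m (Y - 1) + O(u^2/n).
*)

definition clamp :: "real \<Rightarrow> real" where "clamp p = min 1 (max 0 p)"

lemma clamp_01: "0 \<le> clamp p" "clamp p \<le> 1" by (auto simp: clamp_def)

definition bern_mgf :: "real \<Rightarrow> real \<Rightarrow> real" where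
  "bern_mgf q w = 1 - clamp q + clamp q * exp w"

lemma bern_mgf_pos: "0 < bern_mgf q w"
proof (cases "clamp q = 1")
  case False
  then have "0 < 1 - clamp q" using clamp_01[of q] by simp
  moreover have "0 \<le> clamp q * exp w" using clamp_01[of q] by simp
  ultimately show ?thesis unfolding bern_mgf_def by linarith
qed (simp add: bern_mgf_def)

lemma bern_mgf_eq: "0 \<le> q \<Longrightarrow> q \<le> 1 \<Longrightarrow> bern_mgf q w = 1 + q * (exp w - 1)"
  unfolding bern_mgf_def clamp_def by (simp add: algebra_simps)

lemma expectation_bind_finite:
  fixes h :: "'b \<Rightarrow> real"
  assumes "finite (set_pmf p)" "\<And>x. x \<in> set_pmf p \<Longrightarrow> finite (set_pmf (f x))"
  shows "measure_pmf.expectation (p \<bind> f) h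
       = measure_pmf.expectation p (\<lambda>a. measure_pmf.expectation (f a) h)"
proof -
  have "measure_pmf.expectation (p \<bind> f) h
      = (\<Sum>a\<in>set_pmf p. pmf p a *\<^sub>R measure_pmf.expectation (f a) h)"
    using assms by (intro pmf_expectation_bind) auto
  also have "\<dots> = measure_pmf.expectation p (\<lambda>a. measure_pmf.expectation (f a) h)"
    using assms by (subst integral_measure_pmf[of "set_pmf p"]) auto
  finally show ?thesis .
qed

lemma finite_set_binom: "finite (set_pmf (binom N s))"
  unfolding binom_def by (rule finite_set_pmf_binomial_pmf) auto

lemma set_binom_le: "x \<in> set_pmf (binom N s) \<Longrightarrow> x \<le> N"
  unfolding binom_def by (subst (asm) set_pmf_binomial_eq) (auto split: if_splits)

lemma binom_mgf:
  "measure_pmf.expectation (binom N s) (\<lambda>x. exp (w * real x)) = bern_mgf s w ^ N"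
proof -
  have p: "clamp s \<in> {0..1}" using clamp_01 by auto
  have "measure_pmf.expectation (binom N s) (\<lambda>x. exp (w * real x))
     = (\<Sum>k\<le>N. real (N choose k) * (clamp s * exp w) ^ k * (1 - clamp s) ^ (N - k))"
    unfolding binom_def clamp_def[symmetric]
    by (subst expectation_binomial_pmf'[OF p])
       (simp add: exp_of_nat_mult[symmetric] power_mult_distrib mult.commute mult.left_commute)
  also have "\<dots> = (clamp s * exp w + (1 - clamp s)) ^ N"
    by (simp add: binomial_ring)
  finally show ?thesis by (simp add: bern_mgf_def algebra_simps)
qed

lemma rbinoms_support_mgf:
  assumes "distinct js"
  shows "finite (set_pmf (rbinoms u n t c js)) \<and>
    (\<forall>R\<in>set_pmf (rbinoms u n t c js).
       (\<forall>j. j \<notin> set js \<longrightarrow> R j = 0) \<and> (\<forall>j\<in>set js. R j \<le> c j)) \<and>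
    measure_pmf.expectation (rbinoms u n t c js) (\<lambda>R. exp (\<Sum>j\<in>set js. w j * real (R j)))
      = (\<Prod>j\<in>set js. bern_mgf (real j / NN u n t) (w j) ^ c j)"
  using assms
proof (induction js)
  case (Cons j js)
  let ?B = "binom (c j) (real j / NN u n t)"
  from Cons have fin: "finite (set_pmf (rbinoms u n t c js))"
    and supp: "\<And>R. R\<in>set_pmf (rbinoms u n t c js) \<Longrightarrow>
                 (\<forall>j. j \<notin> set js \<longrightarrow> R j = 0) \<and> (\<forall>j\<in>set js. R j \<le> c j)"
    and mgf: "measure_pmf.expectation (rbinoms u n t c js) (\<lambda>R. exp (\<Sum>j\<in>set js. w j * real (R j)))
                = (\<Prod>j\<in>set js. bern_mgf (real j / NN u n t) (w j) ^ c j)"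
    and jn: "j \<notin> set js" by auto
  have sum_upd: "(\<Sum>i\<in>set (j#js). w i * real ((R(j:=x)) i))
      = w j * real x + (\<Sum>i\<in>set js. w i * real (R i))" for R x
  proof -
    have "(\<Sum>i\<in>set js. w i * real ((R(j:=x)) i)) = (\<Sum>i\<in>set js. w i * real (R i))"
      using jn by (intro sum.cong) auto
    then show ?thesis using jn by simp
  qed
  have inner: "measure_pmf.expectation (?B \<bind> (\<lambda>x. return_pmf (R(j := x)))) h
       = measure_pmf.expectation ?B (\<lambda>x. h (R(j:=x)))" for R and h :: "_ \<Rightarrow> real"
    by (subst expectation_bind_finite) (auto simp: finite_set_binom)
  have "measure_pmf.expectation (rbinoms u n t c (j # js)) (\<lambda>R. exp (\<Sum>i\<in>set (j#js). w i * real (R i)))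
      = measure_pmf.expectation (rbinoms u n t c js)
          (\<lambda>R. measure_pmf.expectation ?B (\<lambda>x. exp (\<Sum>i\<in>set (j#js). w i * real ((R(j:=x)) i))))"
    unfolding rbinoms.simps by (subst expectation_bind_finite) (auto simp: fin finite_set_binom inner)
  also have "\<dots> = measure_pmf.expectation (rbinoms u n t c js)
          (\<lambda>R. measure_pmf.expectation ?B (\<lambda>x. exp (w j * real x) * exp (\<Sum>i\<in>set js. w i * real (R i))))"
    by (simp only: sum_upd exp_add)
  also have "\<dots> = bern_mgf (real j / NN u n t) (w j) ^ c j *
      measure_pmf.expectation (rbinoms u n t c js) (\<lambda>R. exp (\<Sum>i\<in>set js. w i * real (R i)))"
    by (simp add: binom_mgf)
  also have "\<dots> = (\<Prod>i\<in>set (j#js). bern_mgf (real i / NN u n t) (w i) ^ c i)"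
    using mgf jn by simp
  finally show ?case
    using fin supp set_binom_le by (auto simp: finite_set_binom)
qed simp

definition tilt :: "nat \<Rightarrow> nat \<Rightarrow> real \<Rightarrow> (nat \<Rightarrow> real) \<Rightarrow> int \<times> (nat \<Rightarrow> nat) \<Rightarrow> real" where
  "tilt k r b a s = exp (b * real_of_int (fst s) + (\<Sum>j\<in>{k-r+2..k}. a j * real (snd s j)))"

definition q_rate :: "nat \<Rightarrow> nat \<Rightarrow> (nat \<Rightarrow> nat) \<Rightarrow> nat \<Rightarrow> nat \<Rightarrow> real" where
  "q_rate k r u n t = 1 / (NN u n t - real k + real r)"

(* Coefficient of R_j in the tilt exponent after one step: R_j leaves level j and enters
   level j-1, or (for the lowest level) adds k-r+1 to E. *)
definition shift_diff :: "nat \<Rightarrow> nat \<Rightarrow> real \<Rightarrow> (nat \<Rightarrow> real) \<Rightarrow> nat \<Rightarrow> real" where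
  "shift_diff k r b a j = (if j = k-r+2 then real (k-r+1) * b else a (j-1)) - a j"

definition next_b :: "nat \<Rightarrow> nat \<Rightarrow> (nat \<Rightarrow> nat) \<Rightarrow> nat \<Rightarrow> nat \<Rightarrow> real \<Rightarrow> real" where
  "next_b k r u n t b = b + ln (bern_mgf (q_rate k r u n t) (- b))"
definition next_a :: "nat \<Rightarrow> nat \<Rightarrow> (nat \<Rightarrow> nat) \<Rightarrow> nat \<Rightarrow> nat \<Rightarrow> real \<Rightarrow> (nat \<Rightarrow> real) \<Rightarrow> nat \<Rightarrow> real" where
  "next_a k r u n t b a = (\<lambda>j. a j + ln (bern_mgf (real j / NN u n t) (shift_diff k r b a j)))"
definition step_factor :: "nat \<Rightarrow> nat \<Rightarrow> (nat \<Rightarrow> nat) \<Rightarrow> nat \<Rightarrow> nat \<Rightarrow> real \<Rightarrow> real" where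
  "step_factor k r u n t b = exp (- b + real t * ln (bern_mgf (q_rate k r u n t) (- b)))"

definition step_state :: "nat \<Rightarrow> nat \<Rightarrow> int \<Rightarrow> (nat \<Rightarrow> nat) \<Rightarrow> (nat \<Rightarrow> nat) \<Rightarrow> nat \<Rightarrow> int \<times> (nat \<Rightarrow> nat)" where
  "step_state k r e c R R' = (e - 1 - int R' + int (k - r + 1) * int (R (k - r + 2)),
       \<lambda>j. if k - r + 2 \<le> j \<and> j \<le> k then c j - R j + R (j + 1) else 0)"

lemma chain_step_unfold:
  "chain_step k r u n t (e, c) = rbinoms u n t c [k - r + 2 ..< k + 1] \<bind>
     (\<lambda>R. binom (nat (e + int t)) (q_rate k r u n t) \<bind> (\<lambda>R'. return_pmf (step_state k r e c R R')))"
  unfolding chain_step_def step_state_def q_rate_def by simp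

(* Index shift used to move the inflow R_{j+1} of level j to level j+1. *)
lemma sum_shift_down:
  fixes a :: "nat \<Rightarrow> real" and R :: "nat \<Rightarrow> nat"
  assumes "lo \<le> hi" "R (Suc hi) = 0"
  shows "(\<Sum>j=lo..hi. a j * real (R (Suc j))) = (\<Sum>j=Suc lo..hi. a (j-1) * real (R j))"
proof -
  have "(\<Sum>j=Suc lo..Suc hi. a (j-1) * real (R j)) = (\<Sum>j=lo..hi. a j * real (R (Suc j)))"
    by (subst sum.shift_bounds_cl_Suc_ivl) simp
  moreover have "(\<Sum>j=Suc lo..Suc hi. a (j-1) * real (R j)) = (\<Sum>j=Suc lo..hi. a (j-1) * real (R j))"
    using assms by (subst sum.cl_ivl_Suc) auto
  ultimately show ?thesis by simp
qed

lemma tilt_exponent_after_step: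
  fixes a :: "nat \<Rightarrow> real" and R c :: "nat \<Rightarrow> nat"
  assumes "2 \<le> r" "r \<le> k" "R (Suc k) = 0" "\<And>j. j \<in> {k-r+2..k} \<Longrightarrow> R j \<le> c j"
  shows "b * (e - 1 - real R' + real (k-r+1) * real (R (k-r+2)))
      + (\<Sum>j\<in>{k-r+2..k}. a j * real (c j - R j + R (j + 1)))
    = b * e - b + (\<Sum>j\<in>{k-r+2..k}. a j * real (c j)) + (- b) * real R'
      + (\<Sum>j\<in>{k-r+2..k}. shift_diff k r b a j * real (R j))"
proof -
  define lo where "lo = k - r + 2"
  have lohi: "lo \<le> k" using assms unfolding lo_def by simp
  have flow: "(\<Sum>j\<in>{lo..k}. a j * real (c j - R j + R (j + 1)))
      = (\<Sum>j\<in>{lo..k}. a j * real (c j)) - (\<Sum>j\<in>{lo..k}. a j * real (R j))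
        + (\<Sum>j\<in>{lo..k}. a j * real (R (Suc j)))"
  proof -
    have "a j * real (c j - R j + R (j+1)) = a j * real (c j) - a j * real (R j) + a j * real (R (Suc j))"
      if "j \<in> {lo..k}" for j
      using assms(4)[of j] that unfolding lo_def by (simp add: of_nat_diff algebra_simps)
    then show ?thesis by (simp add: sum.distrib sum_subtractf)
  qed
  have inflow: "(\<Sum>j\<in>{lo..k}. a j * real (R (Suc j))) = (\<Sum>j=Suc lo..k. a (j-1) * real (R j))"
    using sum_shift_down[of lo k R a, OF lohi assms(3)] by simp
  have diffs: "(\<Sum>j\<in>{lo..k}. shift_diff k r b a j * real (R j))
     = real (k-r+1) * b * real (R lo) + (\<Sum>j=Suc lo..k. a (j-1) * real (R j))
       - (\<Sum>j\<in>{lo..k}. a j * real (R j))"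
  proof -
    have "(\<Sum>j\<in>{lo..k}. shift_diff k r b a j * real (R j))
        = (\<Sum>j\<in>{lo..k}. (if j = lo then real (k-r+1) * b else a (j-1)) * real (R j))
          - (\<Sum>j\<in>{lo..k}. a j * real (R j))"
      unfolding shift_diff_def lo_def[symmetric] by (simp add: sum_subtractf[symmetric] algebra_simps)
    moreover have "(\<Sum>j\<in>{lo..k}. (if j = lo then real (k-r+1) * b else a (j-1)) * real (R j))
       = real (k-r+1) * b * real (R lo) + (\<Sum>j=Suc lo..k. a (j-1) * real (R j))"
      using lohi by (subst sum.atLeast_Suc_atMost) (auto intro!: sum.cong)
    ultimately show ?thesis by simp
  qed
  show ?thesis unfolding lo_def[symmetric] using flow inflow diffs by (simp add: algebra_simps)
qed

(* One step keeps the support finite and preserves the invariant E(t) + t \<ge> 0, which makes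
   the binomial parameter nat (E(t) + t) of R' meaningful. *)
lemma chain_step_support:
  assumes nonneg: "fst s + int t \<ge> 0"
  shows "finite (set_pmf (chain_step k r u n t s))"
    "\<forall>s'\<in>set_pmf (chain_step k r u n t s). fst s' + int (Suc t) \<ge> 0"
proof -
  obtain e c where s: "s = (e, c)" by (cases s)
  have RP: "finite (set_pmf (rbinoms u n t c [k - r + 2 ..< k + 1]))"
    using rbinoms_support_mgf[of "[k - r + 2 ..< k + 1]"] by simp
  show "finite (set_pmf (chain_step k r u n t s))"
    unfolding s chain_step_unfold using RP finite_set_binom by simp
  show "\<forall>s'\<in>set_pmf (chain_step k r u n t s). fst s' + int (Suc t) \<ge> 0"
  proof
    fix s' assume "s' \<in> set_pmf (chain_step k r u n t s)"
    then obtain R R' where R': "R' \<le> nat (e + int t)" and s': "s' = step_state k r e c R R'"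
      unfolding s chain_step_unfold using set_binom_le by fastforce
    have "int R' \<le> e + int t" using R' nonneg unfolding s by simp
    moreover have "0 \<le> int (k - r + 1) * int (R (k - r + 2))" by simp
    moreover have "fst s' = e - 1 - int R' + int (k - r + 1) * int (R (k - r + 2))"
      unfolding s' step_state_def by simp
    ultimately show "fst s' + int (Suc t) \<ge> 0" by linarith
  qed
qed

lemma tilt_step_state:
  assumes r: "2 \<le> r" "r \<le> k"
    and R: "R (Suc k) = 0" "\<And>j. j \<in> {k-r+2..k} \<Longrightarrow> R j \<le> c j"
  shows "tilt k r b a (step_state k r e c R R')
      = exp (b * real_of_int e - b + (\<Sum>j\<in>{k-r+2..k}. a j * real (c j)))
        * exp ((- b) * real R') * exp (\<Sum>j\<in>{k-r+2..k}. shift_diff k r b a j * real (R j))"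
proof -
  have "(\<Sum>j\<in>{k-r+2..k}. a j * real (snd (step_state k r e c R R') j))
      = (\<Sum>j\<in>{k-r+2..k}. a j * real (c j - R j + R (j + 1)))"
    unfolding step_state_def by (intro sum.cong) auto
  then have "tilt k r b a (step_state k r e c R R')
      = exp (b * (real_of_int e - 1 - real R' + real (k-r+1) * real (R (k-r+2)))
             + (\<Sum>j\<in>{k-r+2..k}. a j * real (c j - R j + R (j + 1))))"
    unfolding tilt_def by (simp add: step_state_def)
  also have "\<dots> = exp (b * real_of_int e - b + (\<Sum>j\<in>{k-r+2..k}. a j * real (c j)) + (- b) * real R'
      + (\<Sum>j\<in>{k-r+2..k}. shift_diff k r b a j * real (R j)))"
    using tilt_exponent_after_step[of r k R c b "real_of_int e" R' a, OF r R] by simp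
  finally show ?thesis by (simp only: exp_add[symmetric])
qed

lemma chain_step_tilt:
  assumes r: "2 \<le> r" "r \<le> k" and nonneg: "fst s + int t \<ge> 0"
  shows "measure_pmf.expectation (chain_step k r u n t s) (tilt k r b a)
       = step_factor k r u n t b * tilt k r (next_b k r u n t b) (next_a k r u n t b a) s"
proof -
  obtain e c where s: "s = (e, c)" by (cases s)
  define js where "js = [k - r + 2 ..< k + 1]"
  have sj: "set js = {k-r+2..k}" unfolding js_def by auto
  have "distinct js" unfolding js_def by simp
  note RP = rbinoms_support_mgf[OF this, of u n t c, unfolded sj]
  define q where "q = q_rate k r u n t"
  define A where "A = exp (b * real_of_int e - b + (\<Sum>j\<in>{k-r+2..k}. a j * real (c j)))"
  have supp: "R (Suc k) = 0" "\<And>j. j \<in> {k-r+2..k} \<Longrightarrow> R j \<le> c j"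
    if "R \<in> set_pmf (rbinoms u n t c js)" for R
    using RP that by auto
  have tilt_RR': "tilt k r b a (step_state k r e c R R')
      = A * exp ((- b) * real R') * exp (\<Sum>j\<in>{k-r+2..k}. shift_diff k r b a j * real (R j))"
    if "R \<in> set_pmf (rbinoms u n t c js)" for R R'
    unfolding A_def using tilt_step_state[of r k R c b a e R', OF r supp[OF that]] .
  have "measure_pmf.expectation (chain_step k r u n t s) (tilt k r b a)
     = measure_pmf.expectation (rbinoms u n t c js) (\<lambda>R. measure_pmf.expectation (binom (nat (e + int t)) q)
          (\<lambda>R'. tilt k r b a (step_state k r e c R R')))"
    unfolding s chain_step_unfold js_def[symmetric] q_def[symmetric] using RP finite_set_binom
    by (subst expectation_bind_finite) (auto intro!: Bochner_Integration.integral_cong simp: expectation_bind_finite)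
  also have "\<dots> = measure_pmf.expectation (rbinoms u n t c js)
      (\<lambda>R. A * exp (\<Sum>j\<in>{k-r+2..k}. shift_diff k r b a j * real (R j)) *
           measure_pmf.expectation (binom (nat (e + int t)) q) (\<lambda>R'. exp ((- b) * real R')))"
    by (intro integral_cong_AE) (auto simp: AE_measure_pmf_iff tilt_RR' mult.commute mult.left_commute)
  also have "\<dots> = A * bern_mgf q (- b) ^ nat (e + int t) *
      measure_pmf.expectation (rbinoms u n t c js) (\<lambda>R. exp (\<Sum>j\<in>{k-r+2..k}. shift_diff k r b a j * real (R j)))"
    by (simp only: binom_mgf) (simp add: mult_ac)
  also have "\<dots> = A * bern_mgf q (- b) ^ nat (e + int t)
      * (\<Prod>j\<in>{k-r+2..k}. bern_mgf (real j / NN u n t) (shift_diff k r b a j) ^ c j)"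
    using RP by simp
  also have "\<dots> = step_factor k r u n t b * tilt k r (next_b k r u n t b) (next_a k r u n t b a) s"
  proof -
    have "bern_mgf q (- b) ^ nat (e + int t) = exp (real (nat (e + int t)) * ln (bern_mgf q (- b)))"
      using bern_mgf_pos[of q "- b"] by (simp add: exp_of_nat_mult exp_ln)
    then have "bern_mgf q (- b) ^ nat (e + int t) = exp (real_of_int (e + int t) * ln (bern_mgf q (- b)))"
      using nonneg unfolding s by simp
    moreover have "(\<Prod>j\<in>{k-r+2..k}. bern_mgf (real j / NN u n t) (shift_diff k r b a j) ^ c j)
       = exp (\<Sum>j\<in>{k-r+2..k}. real (c j) * ln (bern_mgf (real j / NN u n t) (shift_diff k r b a j)))"
      using bern_mgf_pos by (simp add: exp_sum exp_of_nat_mult exp_ln)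
    ultimately show ?thesis
      unfolding step_factor_def tilt_def next_b_def next_a_def A_def s q_def
      by (simp add: exp_add[symmetric] algebra_simps sum.distrib)
  qed
  finally show ?thesis .
qed

lemma categorical_expectation:
  assumes nn: "\<And>j. 0 \<le> p j" and sm: "(\<Sum>j\<le>k. p j) = 1"
  shows "set_pmf (categorical k p) \<subseteq> {..k}"
    "measure_pmf.expectation (categorical k p) h = (\<Sum>j\<le>k. p j * h j)"
proof -
  define f where "f = (\<lambda>j. if j \<le> k then p j else 0)"
  have f0: "\<And>x. 0 \<le> f x" using nn unfolding f_def by auto
  have "(\<integral>\<^sup>+x. ennreal (f x) \<partial>count_space UNIV) = (\<Sum>x\<in>{..k}. ennreal (f x))"
    by (rule nn_integral_count_space') (auto simp: f_def)
  also have "\<dots> = ennreal (\<Sum>x\<in>{..k}. f x)" using f0 by (simp add: sum_ennreal)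
  also have "(\<Sum>x\<in>{..k}. f x) = 1" using sm unfolding f_def by simp
  finally have f1: "(\<integral>\<^sup>+x. ennreal (f x) \<partial>count_space UNIV) = 1" by simp
  have pm: "pmf (categorical k p) x = f x" for x
    unfolding categorical_def f_def[symmetric] using pmf_embed_pmf[OF f0 f1] by simp
  show st: "set_pmf (categorical k p) \<subseteq> {..k}"
    using pm by (auto simp: set_pmf_iff f_def split: if_splits)
  show "measure_pmf.expectation (categorical k p) h = (\<Sum>j\<le>k. p j * h j)"
    using st by (subst integral_measure_pmf[of "{..k}"]) (auto simp: pm f_def)
qed

lemma multinomial_mgf:
  fixes \<theta> :: "nat \<Rightarrow> real"
  assumes nn: "\<And>j. 0 \<le> p j" and sm: "(\<Sum>j\<le>k. p j) = 1"
  shows "finite (set_pmf (multinomial k p m)) \<and>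
    measure_pmf.expectation (multinomial k p m) (\<lambda>C. exp (\<Sum>j\<le>k. \<theta> j * real (C j)))
      = (\<Sum>j\<le>k. p j * exp (\<theta> j)) ^ m"
proof (induction m)
  case (Suc m)
  note cat = categorical_expectation[OF nn sm]
  have fc: "finite (set_pmf (categorical k p))" using cat(1) finite_subset by blast
  have add_one: "(\<Sum>i\<le>k. \<theta> i * real ((C(j := C j + 1)) i)) = \<theta> j + (\<Sum>i\<le>k. \<theta> i * real (C i))"
    if "j \<le> k" for C j
  proof -
    have "(\<Sum>i\<le>k. \<theta> i * real ((C(j := C j + 1)) i)) = (\<Sum>i\<le>k. \<theta> i * real (C i) + (if i = j then \<theta> i else 0))"
      by (intro sum.cong) (auto simp: algebra_simps)
    then show ?thesis using that by (simp add: sum.distrib)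
  qed
  have inner: "measure_pmf.expectation (categorical k p \<bind> (\<lambda>j. return_pmf (C(j := C j + 1))))
        (\<lambda>C. exp (\<Sum>j\<le>k. \<theta> j * real (C j)))
     = (\<Sum>j\<le>k. p j * exp (\<theta> j)) * exp (\<Sum>j\<le>k. \<theta> j * real (C j))" for C
  proof -
    have "measure_pmf.expectation (categorical k p \<bind> (\<lambda>j. return_pmf (C(j := C j + 1))))
        (\<lambda>C. exp (\<Sum>j\<le>k. \<theta> j * real (C j)))
      = (\<Sum>j\<le>k. p j * exp (\<Sum>i\<le>k. \<theta> i * real ((C(j := C j + 1)) i)))"
      using fc by (subst expectation_bind_finite) (auto simp: cat(2))
    also have "\<dots> = (\<Sum>j\<le>k. p j * (exp (\<theta> j) * exp (\<Sum>i\<le>k. \<theta> i * real (C i))))"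
      by (intro sum.cong refl) (simp only: add_one exp_add atMost_iff)
    finally show ?thesis by (simp add: sum_distrib_right mult_ac)
  qed
  have "measure_pmf.expectation (multinomial k p (Suc m)) (\<lambda>C. exp (\<Sum>j\<le>k. \<theta> j * real (C j)))
     = measure_pmf.expectation (multinomial k p m)
         (\<lambda>C. (\<Sum>j\<le>k. p j * exp (\<theta> j)) * exp (\<Sum>j\<le>k. \<theta> j * real (C j)))"
    unfolding multinomial.simps using Suc fc
    by (subst expectation_bind_finite) (simp_all only: inner, simp)
  also have "\<dots> = (\<Sum>j\<le>k. p j * exp (\<theta> j)) ^ Suc m" using Suc by simp
  finally show ?case using Suc fc by simp
qed simp

lemma chain_support:
  assumes nn: "\<And>j. 0 \<le> pj k u n j" and sm: "(\<Sum>j\<le>k. pj k u n j) = 1"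
  shows "finite (set_pmf (chain k r u n m t)) \<and> (\<forall>s\<in>set_pmf (chain k r u n m t). fst s + int t \<ge> 0)"
proof (induction t)
  case 0
  have "finite (set_pmf (multinomial k (pj k u n) m))" using multinomial_mgf[OF nn sm] by blast
  then show ?case by (auto simp: chain_init_def intro!: add_nonneg_nonneg sum_nonneg)
next
  case (Suc t)
  then show ?case using chain_step_support by fastforce
qed

lemma chain_tilt_step:
  assumes r: "2 \<le> r" "r \<le> k" and nn: "\<And>j. 0 \<le> pj k u n j" and sm: "(\<Sum>j\<le>k. pj k u n j) = 1"
  shows "measure_pmf.expectation (chain k r u n m (Suc t)) (tilt k r b a)
    = step_factor k r u n t b *
      measure_pmf.expectation (chain k r u n m t) (tilt k r (next_b k r u n t b) (next_a k r u n t b a))"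
proof -
  note CP = chain_support[OF nn sm, of r m t]
  have "measure_pmf.expectation (chain k r u n m (Suc t)) (tilt k r b a)
     = measure_pmf.expectation (chain k r u n m t)
         (\<lambda>s. measure_pmf.expectation (chain_step k r u n t s) (tilt k r b a))"
    using CP chain_step_support(1) by (simp add: expectation_bind_finite)
  also have "\<dots> = measure_pmf.expectation (chain k r u n m t)
      (\<lambda>s. step_factor k r u n t b * tilt k r (next_b k r u n t b) (next_a k r u n t b a) s)"
    using CP chain_step_tilt[OF r] by (intro integral_cong_AE) (auto simp: AE_measure_pmf_iff)
  finally show ?thesis by simp
qed

lemma chain_init_tilt:
  assumes r: "2 \<le> r" "r \<le> k" and nn: "\<And>j. 0 \<le> pj k u n j" and sm: "(\<Sum>j\<le>k. pj k u n j) = 1"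
  shows "measure_pmf.expectation (chain k r u n m 0) (tilt k r b a)
    = (\<Sum>j\<le>k. pj k u n j * exp (if 1 \<le> j \<and> j \<le> k - r + 1 then b * real j
                               else if k - r + 2 \<le> j \<and> j \<le> k then a j else 0)) ^ m"
proof -
  define \<theta> where "\<theta> = (\<lambda>j. if 1 \<le> j \<and> j \<le> k - r + 1 then b * real j
                          else if k - r + 2 \<le> j \<and> j \<le> k then a j else 0)"
  have key: "tilt k r b a (int (\<Sum>j = 1..k - r + 1. j * C j), \<lambda>j. if k - r + 2 \<le> j \<and> j \<le> k then C j else 0)
      = exp (\<Sum>j\<le>k. \<theta> j * real (C j))" for C
  proof -
    have "{..k} = {..k-r+1} \<union> {k-r+2..k}" using r by auto
    then have split: "(\<Sum>j\<le>k. \<theta> j * real (C j))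
        = (\<Sum>j\<le>k-r+1. \<theta> j * real (C j)) + (\<Sum>j\<in>{k-r+2..k}. \<theta> j * real (C j))"
      by (simp add: sum.union_disjoint)
    have low: "(\<Sum>j\<le>k-r+1. \<theta> j * real (C j)) = b * real (\<Sum>j = 1..k - r + 1. j * C j)"
    proof -
      have "(\<Sum>j\<le>k-r+1. \<theta> j * real (C j)) = (\<Sum>j\<in>{1..k-r+1}. \<theta> j * real (C j))"
        by (rule sum.mono_neutral_right) (auto simp: \<theta>_def)
      also have "\<dots> = (\<Sum>j\<in>{1..k-r+1}. b * (real j * real (C j)))"
        by (intro sum.cong) (auto simp: \<theta>_def)
      finally show ?thesis by (simp only: of_nat_sum of_nat_mult sum_distrib_left)
    qed
    have high: "(\<Sum>j\<in>{k-r+2..k}. \<theta> j * real (C j))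
        = (\<Sum>j\<in>{k-r+2..k}. a j * real (if k - r + 2 \<le> j \<and> j \<le> k then C j else 0))"
      by (intro sum.cong) (auto simp: \<theta>_def)
    show ?thesis unfolding tilt_def split low high by simp
  qed
  have "measure_pmf.expectation (chain k r u n m 0) (tilt k r b a)
      = measure_pmf.expectation (multinomial k (pj k u n) m) (\<lambda>C. exp (\<Sum>j\<le>k. \<theta> j * real (C j)))"
    by (simp only: chain.simps chain_init_def integral_map_pmf key)
  also have "\<dots> = (\<Sum>j\<le>k. pj k u n j * exp (\<theta> j)) ^ m"
    using multinomial_mgf[OF nn sm] by blast
  finally show ?thesis unfolding \<theta>_def .
qed

primrec tilt_params :: "nat \<Rightarrow> nat \<Rightarrow> (nat \<Rightarrow> nat) \<Rightarrow> nat \<Rightarrow> real \<Rightarrow> nat \<Rightarrow> nat \<Rightarrow> real \<times> (nat \<Rightarrow> real)" where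
  "tilt_params k r u n lam T 0 = (lam, \<lambda>_. 0)"
| "tilt_params k r u n lam T (Suc S) =
     (next_b k r u n (T - Suc S) (fst (tilt_params k r u n lam T S)),
      next_a k r u n (T - Suc S) (fst (tilt_params k r u n lam T S)) (snd (tilt_params k r u n lam T S)))"

lemma chain_tilt_iterate:
  assumes r: "2 \<le> r" "r \<le> k" and nn: "\<And>j. 0 \<le> pj k u n j" and sm: "(\<Sum>j\<le>k. pj k u n j) = 1"
  shows "S \<le> T \<Longrightarrow> measure_pmf.expectation (chain k r u n m T) (\<lambda>s. exp (lam * real_of_int (fst s)))
    = (\<Prod>i<S. step_factor k r u n (T - Suc i) (fst (tilt_params k r u n lam T i))) *
      measure_pmf.expectation (chain k r u n m (T - S))
        (tilt k r (fst (tilt_params k r u n lam T S)) (snd (tilt_params k r u n lam T S)))"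
proof (induction S)
  case 0
  then show ?case by (simp add: tilt_def)
next
  case (Suc S)
  have "T - S = Suc (T - Suc S)" using Suc by simp
  then show ?case using Suc chain_tilt_step[OF r nn sm, of m "T - Suc S"] by (simp add: mult_ac)
qed

theorem exact_mgf_formula:
  assumes r: "2 \<le> r" "r \<le> k" and nn: "\<And>j. 0 \<le> pj k u n j" and sm: "(\<Sum>j\<le>k. pj k u n j) = 1"
  shows "measure_pmf.expectation (chain k r u n m T) (\<lambda>s. exp (lam * real_of_int (fst s)))
    = (\<Prod>i<T. step_factor k r u n (T - Suc i) (fst (tilt_params k r u n lam T i))) *
      (\<Sum>j\<le>k. pj k u n j * exp (if 1 \<le> j \<and> j \<le> k - r + 1 then fst (tilt_params k r u n lam T T) * real j
          else if k - r + 2 \<le> j \<and> j \<le> k then snd (tilt_params k r u n lam T T) j else 0)) ^ m"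
  using chain_tilt_iterate[OF r nn sm, of T T m lam] chain_init_tilt[OF r nn sm] by simp

lemma exp_taylor_bounds:
  fixes z :: real assumes "\<bar>z\<bar> \<le> 1"
  shows "0 \<le> exp z - 1 - z" "exp z - 1 - z \<le> z\<^sup>2"
proof -
  show "0 \<le> exp z - 1 - z" using exp_ge_add_one_self[of z] by linarith
  show "exp z - 1 - z \<le> z\<^sup>2"
  proof (cases "0 \<le> z")
    case True
    then show ?thesis using exp_bound[of z] assms by simp
  next
    case False
    define w where "w = - z"
    have w: "0 < w" "w \<le> 1" using False assms unfolding w_def by auto
    have "exp w \<ge> 1 + w" by simp
    then have "exp (-w) \<le> 1 / (1 + w)" using w by (simp add: exp_minus field_simps)
    also have "1 / (1 + w) \<le> 1 - w + w\<^sup>2"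
    proof -
      have "1 \<le> (1 + w) * (1 - w + w\<^sup>2)" using w by (simp add: power2_eq_square algebra_simps)
      then show ?thesis using w by (simp add: field_simps)
    qed
    finally show ?thesis unfolding w_def by (simp add: power2_eq_square)
  qed
qed

lemma exp_taylor_abs: fixes z :: real assumes "\<bar>z\<bar> \<le> 1" shows "\<bar>exp z - 1 - z\<bar> \<le> z\<^sup>2"
  using exp_taylor_bounds[OF assms] by linarith

lemma exp_minus_one_abs: fixes z :: real assumes "\<bar>z\<bar> \<le> 1" shows "\<bar>exp z - 1\<bar> \<le> 2 * \<bar>z\<bar>"
proof -
  have "z\<^sup>2 = \<bar>z\<bar> * \<bar>z\<bar>" by (simp add: power2_eq_square abs_mult_self_eq)
  also have "\<dots> \<le> \<bar>z\<bar> * 1" using assms by (intro mult_left_mono) auto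
  finally show ?thesis using exp_taylor_bounds[OF assms] by linarith
qed

lemma exp_lipschitz:
  fixes a b :: real assumes "\<bar>a - b\<bar> \<le> 1" shows "\<bar>exp a - exp b\<bar> \<le> 2 * exp b * \<bar>a - b\<bar>"
proof -
  have "exp a - exp b = exp b * (exp (a - b) - 1)" by (simp add: exp_diff field_simps)
  then have "\<bar>exp a - exp b\<bar> = exp b * \<bar>exp (a - b) - 1\<bar>" by (simp add: abs_mult)
  also have "\<dots> \<le> exp b * (2 * \<bar>a - b\<bar>)" using exp_minus_one_abs[OF assms] by (intro mult_left_mono) auto
  finally show ?thesis by simp
qed

lemma ln_one_plus_abs: fixes y :: real assumes "\<bar>y\<bar> \<le> 1/2" shows "\<bar>ln (1 + y)\<bar> \<le> 2 * \<bar>y\<bar>"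
proof -
  have "2 * y\<^sup>2 = \<bar>y\<bar> * (2 * \<bar>y\<bar>)" by (simp add: power2_eq_square abs_mult_self_eq)
  also have "\<dots> \<le> \<bar>y\<bar> * 1" using assms by (intro mult_left_mono) auto
  finally show ?thesis using abs_ln_one_plus_x_minus_x_bound[OF assms] by linarith
qed

lemma abs_diff_chain3: fixes a b c d :: real shows "\<bar>a - d\<bar> \<le> \<bar>a - b\<bar> + \<bar>b - c\<bar> + \<bar>c - d\<bar>"
  by linarith

(* A falling product X (X-1) ... (X-j+1) whose factors lie in [N - D, N] is N^j up to a
   relative error j D / N (Bernoulli's inequality). *)
lemma falling_prod_bounds:
  fixes X N D e :: real
  assumes N: "0 < N" and D: "0 \<le> D" "D \<le> N" and X: "X \<le> N"
    and low: "\<And>l. l < j \<Longrightarrow> N - D \<le> X - real l" and e: "real j * (D / N) \<le> e"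
  shows "N ^ j * (1 - e) \<le> (\<Prod>l<j. X - real l)" "(\<Prod>l<j. X - real l) \<le> N ^ j"
proof -
  have c0: "0 \<le> N - D" using D by simp
  have "(\<Prod>l<j. X - real l) \<le> (\<Prod>l<j. N)"
  proof (intro prod_mono conjI)
    fix l assume "l \<in> {..<j}"
    then show "0 \<le> X - real l" using low[of l] c0 by simp
  qed (use X in auto)
  then show "(\<Prod>l<j. X - real l) \<le> N ^ j" by simp
  have "N ^ j * (1 - e) \<le> N ^ j * (1 - real j * (D / N))"
    using N e by (intro mult_left_mono) auto
  also have "1 - real j * (D / N) \<le> (1 - D / N) ^ j"
    using Bernoulli_inequality[of "- (D / N)" j] D N by simp
  then have "N ^ j * (1 - real j * (D / N)) \<le> N ^ j * (1 - D / N) ^ j"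
    using N by (intro mult_left_mono) auto
  also have "N ^ j * (1 - D / N) ^ j = (\<Prod>l<j. N - D)"
    using N by (simp add: power_mult_distrib[symmetric] algebra_simps)
  also have "\<dots> \<le> (\<Prod>l<j. X - real l)"
    using low c0 by (intro prod_mono) auto
  finally show "N ^ j * (1 - e) \<le> (\<Prod>l<j. X - real l)" .
qed

lemma binomial_falling_prod: "real (N choose j) = (\<Prod>l<j. real N - real l) / fact j"
  by (simp add: binomial_gbinomial gbinomial_prod_rev atLeast0LessThan)

lemma pochhammer_fact: "pochhammer (real L + 1) i * fact L = (fact (L + i) :: real)"
proof (induction i)
  case (Suc i)
  have "pochhammer (real L + 1) (Suc i) * fact L = (pochhammer (real L + 1) i * fact L) * (real L + 1 + real i)"
    by (simp add: pochhammer_Suc mult_ac)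
  also have "\<dots> = fact (L + Suc i)" using Suc by (simp add: fact_Suc mult.commute)
  finally show ?case .
qed simp

lemma ratio_relative_error:
  fixes N D Z G eN eD :: real
  assumes Z: "0 < Z" and G: "0 < G" and N: "Z * (1 - eN) \<le> N" "N \<le> Z"
    and D: "G * (1 - eD) \<le> D" "D \<le> G"
    and e: "0 \<le> eN" "eN \<le> 1" "0 \<le> eD" "eD \<le> 1/2"
  shows "\<bar>N / D - Z / G\<bar> \<le> Z / G * (eN + 2 * eD)"
proof -
  have G1: "0 < G * (1 - eD)" using G e by simp
  have D0: "0 < D" using G1 D by linarith
  have "N / D \<le> Z / (G * (1 - eD))"
    using N D0 Z G1 D by (intro frac_le) auto
  also have "\<dots> \<le> Z / G * (1 + 2 * eD)"
  proof -
    have "(1 - eD) * (1 + 2 * eD) = 1 + eD * (1 - 2 * eD)" by (simp add: algebra_simps)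
    moreover have "0 \<le> eD * (1 - 2 * eD)" using e by simp
    ultimately have "1 \<le> (1 - eD) * (1 + 2 * eD)" by linarith
    then have "1 / (1 - eD) \<le> 1 + 2 * eD" using e by (simp add: divide_simps mult.commute)
    then have "Z / G * (1 / (1 - eD)) \<le> Z / G * (1 + 2 * eD)" using Z G by (intro mult_left_mono) auto
    then show ?thesis by simp
  qed
  finally have up: "N / D - Z / G \<le> Z / G * (2 * eD)" by (simp add: algebra_simps)
  have "Z * (1 - eN) / G \<le> Z * (1 - eN) / D" using Z e D0 D by (intro divide_left_mono) auto
  also have "\<dots> \<le> N / D" using N D0 by (simp add: divide_right_mono)
  finally have lo: "Z / G - N / D \<le> Z / G * eN" by (simp add: diff_divide_distrib algebra_simps)
  have "0 \<le> Z / G * eN" "0 \<le> Z / G * (2 * eD)" using Z G e by auto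
  then show ?thesis using up lo by (simp add: abs_le_iff algebra_simps)
qed

lemma mult4_mono:
  fixes a b c d a' b' c' d' :: real
  assumes "0 \<le> a'" "a' \<le> a" "0 \<le> b'" "b' \<le> b" "0 \<le> c'" "c' \<le> c" "0 \<le> d'" "d' \<le> d"
  shows "a' * b' * c' * d' \<le> a * b * c * d"
  using assms by (intro mult_mono) (auto intro!: mult_nonneg_nonneg)

lemma one_minus_sum_le_prod4:
  fixes a b c d :: real
  assumes "0 \<le> a" "a \<le> 1" "0 \<le> b" "b \<le> 1" "0 \<le> c" "c \<le> 1" "0 \<le> d" "d \<le> 1"
  shows "1 - (a + b + c + d) \<le> (1 - a) * (1 - b) * (1 - c) * (1 - d)"
proof -
  have ab: "1 - (a + b) \<le> (1 - a) * (1 - b)" using assms by (simp add: algebra_simps)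
  have "1 - (a + b + c) \<le> (1 - (a + b)) * (1 - c)" using assms by (simp add: algebra_simps)
  also have "\<dots> \<le> (1 - a) * (1 - b) * (1 - c)" using ab assms by (intro mult_right_mono) auto
  finally have abc: "1 - (a + b + c) \<le> (1 - a) * (1 - b) * (1 - c)" .
  have "1 - (a + b + c + d) \<le> (1 - (a + b + c)) * (1 - d)" using assms by (simp add: algebra_simps)
  also have "\<dots> \<le> (1 - a) * (1 - b) * (1 - c) * (1 - d)" using abc assms by (intro mult_right_mono) auto
  finally show ?thesis .
qed

lemma log_bern_linear:
  fixes s d :: real
  assumes s: "0 \<le> s" "s \<le> 1" and z: "\<bar>s * (exp d - 1)\<bar> \<le> 1/2"
  shows "\<bar>ln (bern_mgf s d) - s * (exp d - 1)\<bar> \<le> 2 * (s * (exp d - 1))\<^sup>2"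
  using abs_ln_one_plus_x_minus_x_bound[OF z] bern_mgf_eq[OF s] by simp

lemma log_bern_quadratic:
  fixes s d \<sigma> \<delta> :: real
  assumes s: "0 \<le> s" "s \<le> \<sigma>" "\<sigma> \<le> 1" and d: "\<bar>d\<bar> \<le> \<delta>" "\<delta> \<le> 1" and small: "2 * \<sigma> * \<delta> \<le> 1/2"
  shows "\<bar>ln (bern_mgf s d) - s * d\<bar> \<le> 2 * (2 * \<sigma> * \<delta>)\<^sup>2 + \<sigma> * \<delta>\<^sup>2"
proof -
  have d1: "\<bar>d\<bar> \<le> 1" using d by linarith
  have z: "\<bar>s * (exp d - 1)\<bar> \<le> 2 * \<sigma> * \<delta>"
  proof -
    have "\<bar>exp d - 1\<bar> \<le> 2 * \<delta>" using exp_minus_one_abs[OF d1] d by linarith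
    then have "s * \<bar>exp d - 1\<bar> \<le> \<sigma> * (2 * \<delta>)" using s by (intro mult_mono) auto
    then show ?thesis using s by (simp add: abs_mult)
  qed
  have "\<bar>ln (bern_mgf s d) - s * (exp d - 1)\<bar> \<le> 2 * (s * (exp d - 1))\<^sup>2"
    using z small s by (intro log_bern_linear) auto
  also have "\<dots> \<le> 2 * (2 * \<sigma> * \<delta>)\<^sup>2"
    using power_mono[OF z, of 2] by simp
  finally have lin: "\<bar>ln (bern_mgf s d) - s * (exp d - 1)\<bar> \<le> 2 * (2 * \<sigma> * \<delta>)\<^sup>2" .
  have "s * (exp d - 1) - s * d = s * (exp d - 1 - d)" by (simp add: algebra_simps)
  then have "\<bar>s * (exp d - 1) - s * d\<bar> = s * \<bar>exp d - 1 - d\<bar>" using s by (simp add: abs_mult)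
  also have "\<dots> \<le> \<sigma> * \<delta>\<^sup>2"
    using exp_taylor_abs[OF d1] power_mono[OF d(1), of 2] s by (intro mult_mono) auto
  finally show ?thesis using lin by linarith
qed

lemma prod4_relative_bounds:
  fixes a b c d A B C D ea eb ec ed :: real
  assumes lo: "A * (1 - ea) \<le> a" "B * (1 - eb) \<le> b" "C * (1 - ec) \<le> c" "D * (1 - ed) \<le> d"
    and up: "a \<le> A" "b \<le> B" "c \<le> C" "d \<le> D"
    and e: "0 \<le> ea" "ea \<le> 1" "0 \<le> eb" "eb \<le> 1" "0 \<le> ec" "ec \<le> 1" "0 \<le> ed" "ed \<le> 1"
    and pos: "0 \<le> A" "0 \<le> B" "0 \<le> C" "0 \<le> D"
  shows "A * B * C * D * (1 - (ea + eb + ec + ed)) \<le> a * b * c * d" "a * b * c * d \<le> A * B * C * D"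
proof -
  have lo0: "0 \<le> A * (1 - ea)" "0 \<le> B * (1 - eb)" "0 \<le> C * (1 - ec)" "0 \<le> D * (1 - ed)"
    using e pos by auto
  have "A * B * C * D * (1 - (ea + eb + ec + ed)) \<le> A * B * C * D * ((1 - ea) * (1 - eb) * (1 - ec) * (1 - ed))"
    using one_minus_sum_le_prod4[of ea eb ec ed] e pos by (intro mult_left_mono) auto
  also have "\<dots> = (A * (1 - ea)) * (B * (1 - eb)) * (C * (1 - ec)) * (D * (1 - ed))" by (simp add: mult_ac)
  also have "\<dots> \<le> a * b * c * d" using lo lo0 by (intro mult4_mono) auto
  finally show "A * B * C * D * (1 - (ea + eb + ec + ed)) \<le> a * b * c * d" .
  show "a * b * c * d \<le> A * B * C * D" using lo lo0 up by (intro mult4_mono) (auto intro: order_trans)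
qed

locale tilt_asymptotics =
  fixes k r :: nat and lam mu tau :: real
  assumes r2: "2 \<le> r" and rk: "r \<le> k" and mu_pos: "0 < mu" and tau_pos: "0 < tau"
begin

definition horizon :: "(nat \<Rightarrow> nat) \<Rightarrow> nat \<Rightarrow> nat" where "horizon u n = nat \<lfloor>tau * real (u n)\<rfloor>"
definition bcoef :: "(nat \<Rightarrow> nat) \<Rightarrow> nat \<Rightarrow> nat \<Rightarrow> real" where
  "bcoef u n S = fst (tilt_params k r u n lam (horizon u n) S)"
definition acoef :: "(nat \<Rightarrow> nat) \<Rightarrow> nat \<Rightarrow> nat \<Rightarrow> nat \<Rightarrow> real" where
  "acoef u n S = snd (tilt_params k r u n lam (horizon u n) S)"

definition ratio :: "(nat \<Rightarrow> nat) \<Rightarrow> nat \<Rightarrow> real" where "ratio u n = real (u n) / real n"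

(* Per-step drift bound for the b-parameter is Cb / n. *)
definition Cb :: real where "Cb = 4 * (exp (\<bar>lam\<bar> + 1) + 1)"

definition regime0 :: "(nat \<Rightarrow> nat) \<Rightarrow> nat \<Rightarrow> bool" where
  "regime0 u n \<longleftrightarrow> 1 \<le> real (u n) \<and> 4 * (1 + tau) * real (u n) \<le> real n \<and> 8 * (real k + 1) \<le> real n
     \<and> Cb \<le> real n \<and> Cb * tau * real (u n) \<le> real n"

lemma Cb_pos: "Cb > 0" unfolding Cb_def by (simp add: add_pos_pos)

lemma horizon_bounds: "real (horizon u n) \<le> tau * real (u n)" "tau * real (u n) - 1 \<le> real (horizon u n)"
proof -
  have "0 \<le> tau * real (u n)" using tau_pos by simp
  then show "real (horizon u n) \<le> tau * real (u n)" unfolding horizon_def by linarith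
  show "tau * real (u n) - 1 \<le> real (horizon u n)" unfolding horizon_def by linarith
qed

lemma regime0_sizes:
  assumes g: "regime0 u n" and t: "t \<le> horizon u n"
  shows "NN u n t \<ge> 3/4 * real n" "0 < real n" "u n \<le> n" "k \<le> n" "2 * real k / real n \<le> 1/4"
proof -
  show "2 * real k / real n \<le> 1/4" using g unfolding regime0_def by (simp add: divide_simps)
  have "real t \<le> tau * real (u n)" using t horizon_bounds(1)[of u n] by linarith
  moreover have "real (u n) + tau * real (u n) \<le> real n / 4"
    using g unfolding regime0_def by (simp add: algebra_simps)
  ultimately show "NN u n t \<ge> 3/4 * real n" unfolding NN_def by linarith
  show "0 < real n" "k \<le> n" using g unfolding regime0_def by auto
  have "real (u n) \<le> 4 * (1 + tau) * real (u n)" using tau_pos by (simp add: algebra_simps)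
  then have "real (u n) \<le> real n" using g unfolding regime0_def by linarith
  then show "u n \<le> n" by simp
qed

lemma regime0_ratio:
  assumes g: "regime0 u n"
  shows "0 < ratio u n" "ratio u n \<le> 1" "1 / real n \<le> ratio u n"
    "S \<le> horizon u n \<Longrightarrow> real S / real n \<le> tau * ratio u n"
proof -
  note sz = regime0_sizes[OF g, of 0]
  have U1: "1 \<le> real (u n)" using g unfolding regime0_def by simp
  then show "0 < ratio u n" "1 / real n \<le> ratio u n"
    unfolding ratio_def using sz by (auto simp: divide_right_mono)
  show "ratio u n \<le> 1" unfolding ratio_def using sz by simp
  assume "S \<le> horizon u n"
  then have "real S \<le> tau * real (u n)" using horizon_bounds(1)[of u n] by linarith
  then show "real S / real n \<le> tau * ratio u n" unfolding ratio_def using sz by (simp add: divide_right_mono)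
qed

lemma q_rate_bounds:
  assumes g: "regime0 u n" and t: "t \<le> horizon u n"
  shows "0 < q_rate k r u n t" "q_rate k r u n t \<le> 2 / real n" "q_rate k r u n t \<le> 1"
proof -
  note sz = regime0_sizes[OF g t]
  have kn: "8 * (real k + 1) \<le> real n" using g unfolding regime0_def by simp
  have D: "NN u n t - real k + real r \<ge> real n / 2" using sz kn by simp
  then show "0 < q_rate k r u n t" "q_rate k r u n t \<le> 2 / real n"
    unfolding q_rate_def using sz by (auto simp: divide_simps)
  moreover have "2 / real n \<le> 1" using kn sz by (simp add: divide_simps)
  ultimately show "q_rate k r u n t \<le> 1" by linarith
qed

lemma level_rate_bounds:
  assumes g: "regime0 u n" and t: "t \<le> horizon u n" and j: "j \<le> k"
  shows "0 \<le> real j / NN u n t" "real j / NN u n t \<le> 2 * real k / real n" "real j / NN u n t \<le> 1/4"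
proof -
  note sz = regime0_sizes[OF g t]
  show "0 \<le> real j / NN u n t" using sz by simp
  have "real j / NN u n t \<le> real k / (3/4 * real n)"
    using sz j by (intro frac_le) auto
  also have "\<dots> \<le> 2 * real k / real n" using sz by (simp add: divide_simps)
  finally show s2: "real j / NN u n t \<le> 2 * real k / real n" .
  then show "real j / NN u n t \<le> 1/4" using s2 sz(5) by linarith
qed

lemma level_rate_close:
  assumes g: "regime0 u n" and t: "t \<le> horizon u n" and j: "j \<le> k"
  shows "\<bar>real j / NN u n t - real j / real n\<bar> \<le> 2 * real k * (1 + tau) * ratio u n / real n"
proof -
  note sz = regime0_sizes[OF g t]
  have Np: "NN u n t > 0" using sz by linarith
  have tt: "real t \<le> tau * real (u n)" using t horizon_bounds[of u n] by linarith
  have "real j / NN u n t - real j / real n = real j * (real (u n) + real t) / (NN u n t * real n)"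
    using Np sz unfolding NN_def by (simp add: field_simps)
  moreover have "0 \<le> real j * (real (u n) + real t) / (NN u n t * real n)" using Np sz by simp
  moreover have "real j * (real (u n) + real t) / (NN u n t * real n)
      \<le> real k * ((1 + tau) * real (u n)) / (3/4 * real n * real n)"
    using Np sz j tt tau_pos by (intro frac_le mult_mono mult_pos_pos) (auto simp: algebra_simps)
  moreover have "real k * ((1 + tau) * real (u n)) / (3/4 * real n * real n)
      \<le> 2 * real k * (1 + tau) * ratio u n / real n"
    using sz tau_pos unfolding ratio_def by (simp add: divide_simps)
  ultimately show ?thesis by simp
qed

lemma bcoef_Suc:
  "bcoef u n (Suc S) = bcoef u n S + ln (bern_mgf (q_rate k r u n (horizon u n - Suc S)) (- bcoef u n S))"
  unfolding bcoef_def by (simp add: next_b_def)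

lemma log_bern_b_bound:
  assumes g: "regime0 u n" and t: "t \<le> horizon u n" and b: "\<bar>b - lam\<bar> \<le> 1"
  shows "\<bar>ln (bern_mgf (q_rate k r u n t) (- b))\<bar> \<le> Cb / real n"
proof -
  note q = q_rate_bounds[OF g t]
  define y where "y = q_rate k r u n t * (exp (-b) - 1)"
  have n0: "0 < real n" using regime0_sizes[OF g t] by simp
  have "\<bar>exp (-b) - 1\<bar> \<le> exp (\<bar>lam\<bar> + 1) + 1"
    using b exp_gt_zero[of "-b"] exp_le_cancel_iff[of "-b" "\<bar>lam\<bar> + 1"] by (smt (verit))
  then have "\<bar>y\<bar> \<le> 2 / real n * (exp (\<bar>lam\<bar> + 1) + 1)"
    unfolding y_def abs_mult using q by (intro mult_mono) auto
  also have "\<dots> = Cb / 2 / real n" unfolding Cb_def using n0 by (simp add: field_simps)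
  finally have y2: "\<bar>y\<bar> \<le> Cb / 2 / real n" .
  moreover have "Cb / 2 / real n \<le> 1/2" using g n0 unfolding regime0_def by (simp add: divide_simps)
  ultimately have "\<bar>ln (1 + y)\<bar> \<le> 2 * \<bar>y\<bar>" by (intro ln_one_plus_abs) linarith
  moreover have "bern_mgf (q_rate k r u n t) (- b) = 1 + y"
    unfolding y_def using q by (simp add: bern_mgf_eq)
  ultimately show ?thesis using y2 by simp
qed

lemma bcoef_close:
  assumes g: "regime0 u n"
  shows "S \<le> horizon u n \<Longrightarrow> \<bar>bcoef u n S - lam\<bar> \<le> Cb * real S / real n"
proof (induction S)
  case 0
  then show ?case by (simp add: bcoef_def)
next
  case (Suc S)
  have n0: "0 < real n" using regime0_sizes[OF g, of 0] by simp
  have IH: "\<bar>bcoef u n S - lam\<bar> \<le> Cb * real S / real n" using Suc by simp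
  have "Cb * real S / real n \<le> Cb * tau * real (u n) / real n"
    using Suc(2) horizon_bounds[of u n] Cb_pos n0 by (simp add: divide_simps)
  also have "\<dots> \<le> 1" using g n0 unfolding regime0_def by (simp add: divide_simps)
  finally have "\<bar>bcoef u n S - lam\<bar> \<le> 1" using IH by linarith
  then have "\<bar>ln (bern_mgf (q_rate k r u n (horizon u n - Suc S)) (- bcoef u n S))\<bar> \<le> Cb / real n"
    using log_bern_b_bound[OF g] by simp
  then show ?case using IH unfolding bcoef_Suc by (simp add: add_divide_distrib algebra_simps)
qed

lemma bcoef_near_lam: assumes g: "regime0 u n" and S: "S \<le> horizon u n" shows "\<bar>bcoef u n S - lam\<bar> \<le> 1"
proof -
  have n0: "0 < real n" using regime0_sizes[OF g, of 0] by simp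
  have "Cb * real S / real n \<le> Cb * tau * real (u n) / real n"
    using S horizon_bounds[of u n] Cb_pos n0 by (simp add: divide_simps)
  also have "\<dots> \<le> 1" using g n0 unfolding regime0_def by (simp add: divide_simps)
  finally show ?thesis using bcoef_close[OF g S] by linarith
qed

lemma bcoef_final_close:
  assumes g: "regime0 u n" shows "\<bar>bcoef u n (horizon u n) - lam\<bar> \<le> Cb * tau * ratio u n"
proof -
  have "\<bar>bcoef u n (horizon u n) - lam\<bar> \<le> Cb * (real (horizon u n) / real n)" using bcoef_close[OF g] by simp
  also have "\<dots> \<le> Cb * (tau * ratio u n)"
    using regime0_ratio(4)[OF g, of "horizon u n"] Cb_pos by (intro mult_left_mono) auto
  finally show ?thesis by simp
qed

lemma log_step_factor_close:
  assumes g: "regime0 u n" and i: "i < horizon u n"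
  shows "\<bar>ln (step_factor k r u n (horizon u n - Suc i) (bcoef u n i)) + lam\<bar>
     \<le> 2 * Cb * real (horizon u n) / real n"
proof -
  define T where "T = horizon u n"
  define L where "L = ln (bern_mgf (q_rate k r u n (T - Suc i)) (- bcoef u n i))"
  have n0: "0 < real n" using regime0_sizes[OF g, of 0] by simp
  have "\<bar>bcoef u n i - lam\<bar> \<le> Cb * real i / real n" using bcoef_close[OF g, of i] i unfolding T_def by simp
  also have "\<dots> \<le> Cb * real T / real n" using i Cb_pos n0 unfolding T_def by (simp add: divide_simps)
  finally have b: "\<bar>bcoef u n i - lam\<bar> \<le> Cb * real T / real n" .
  have "\<bar>L\<bar> \<le> Cb / real n"
    using log_bern_b_bound[OF g _ bcoef_near_lam[OF g]] i unfolding L_def T_def by simp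
  then have "\<bar>real (T - Suc i) * L\<bar> \<le> real T * (Cb / real n)"
    unfolding abs_mult by (intro mult_mono) auto
  moreover have "ln (step_factor k r u n (T - Suc i) (bcoef u n i)) = - bcoef u n i + real (T - Suc i) * L"
    unfolding step_factor_def L_def by simp
  moreover have "2 * Cb * real T / real n = Cb * real T / real n + real T * (Cb / real n)" by simp
  ultimately show ?thesis using b unfolding T_def by linarith
qed

lemma log_prod_step_factors:
  assumes g: "regime0 u n"
  shows "\<bar>ln (\<Prod>i<horizon u n. step_factor k r u n (horizon u n - Suc i) (bcoef u n i)) + lam * tau * real (u n)\<bar>
     \<le> \<bar>lam\<bar> + 2 * Cb * tau\<^sup>2 * (real (u n))\<^sup>2 / real n"
proof -
  define T where "T = horizon u n"
  define l where "l = (\<lambda>i. ln (step_factor k r u n (T - Suc i) (bcoef u n i)))"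
  have n0: "0 < real n" using regime0_sizes[OF g, of 0] by simp
  have "ln (\<Prod>i<T. step_factor k r u n (T - Suc i) (bcoef u n i)) = (\<Sum>i<T. l i)"
    unfolding l_def step_factor_def by (simp add: exp_sum[symmetric])
  then have "\<bar>ln (\<Prod>i<T. step_factor k r u n (T - Suc i) (bcoef u n i)) + lam * real T\<bar> = \<bar>\<Sum>i<T. l i + lam\<bar>"
    by (simp add: sum.distrib mult.commute)
  also have "\<dots> \<le> (\<Sum>i<T. 2 * Cb * real T / real n)"
    using log_step_factor_close[OF g] unfolding l_def T_def
    by (intro order_trans[OF sum_abs] sum_mono) auto
  also have "\<dots> = 2 * Cb * (real T)\<^sup>2 / real n" by (simp add: power2_eq_square)
  also have "\<dots> \<le> 2 * Cb * tau\<^sup>2 * (real (u n))\<^sup>2 / real n"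
  proof -
    have "(real T)\<^sup>2 \<le> (tau * real (u n))\<^sup>2"
      using horizon_bounds unfolding T_def by (intro power_mono) auto
    then show ?thesis using Cb_pos n0 by (simp add: divide_simps power_mult_distrib)
  qed
  finally have main: "\<bar>ln (\<Prod>i<T. step_factor k r u n (T - Suc i) (bcoef u n i)) + lam * real T\<bar>
      \<le> 2 * Cb * tau\<^sup>2 * (real (u n))\<^sup>2 / real n" .
  have "\<bar>real T - tau * real (u n)\<bar> \<le> 1" using horizon_bounds[of u n] unfolding T_def by linarith
  then have "\<bar>lam\<bar> * \<bar>real T - tau * real (u n)\<bar> \<le> \<bar>lam\<bar>" by (simp add: mult_left_le)
  then have "\<bar>lam * real T - lam * tau * real (u n)\<bar> \<le> \<bar>lam\<bar>"
    by (simp add: abs_mult[symmetric] algebra_simps)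
  then show ?thesis using main unfolding T_def by linarith
qed

end

context tilt_asymptotics begin

(* L = k - r + 1 is the largest level folded into E(0); cL = e^(L lam) - 1. *)
definition L :: nat where "L = k - r + 1"
definition cL :: real where "cL = exp (real L * lam) - 1"

definition apoly :: "nat \<Rightarrow> nat \<Rightarrow> nat \<Rightarrow> real" where
  "apoly n i S = cL * pochhammer (real L + 1) i * real (S choose i) / real n ^ i"

(* Constants of the level-wise error bounds: |a_{L+i} - apoly i| \<le> Mlev (i-1) x^i S / n. *)
definition Ka :: real where "Ka = \<bar>cL\<bar> * real k ^ k * (1 + tau) ^ k + 1"
definition E1 :: real where "E1 = exp (real L * \<bar>lam\<bar> + 1) + 1"
definition M1 :: real where
  "M1 = 8 * (real k)\<^sup>2 * E1\<^sup>2 + 4 * real k * exp (real L * \<bar>lam\<bar>) * (real L * Cb * tau + Ka)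
        + 2 * real k * (1 + tau) * \<bar>cL\<bar>"
definition D0 :: real where
  "D0 = 128 * (real k)\<^sup>2 * Ka\<^sup>2 + 8 * real k * Ka\<^sup>2 + 2 * real k * Ka + 2 * real k * (1 + tau) * Ka"
primrec Mlev :: "nat \<Rightarrow> real" where
  "Mlev 0 = M1"
| "Mlev (Suc i) = 2 * real k * tau * Mlev i + D0"
definition Msum :: real where "Msum = (\<Sum>i<k. Mlev i)"

definition regime1 :: "(nat \<Rightarrow> nat) \<Rightarrow> nat \<Rightarrow> bool" where
  "regime1 u n \<longleftrightarrow> regime0 u n \<and> Msum * tau * real (u n) \<le> real n \<and> 2 * Ka * real (u n) \<le> real n
     \<and> (real L * Cb * tau + Ka) * real (u n) \<le> real n \<and> 16 * real k * Ka \<le> real n \<and> 4 * real k * E1 \<le> real n"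

lemma L_facts: "L \<ge> 1" "L + (r - 1) = k" "k - r + 2 = L + 1" "k - r + 1 = L" "L + 1 \<le> k" "1 \<le> k"
  using r2 rk unfolding L_def by auto

lemma Ka_ge1: "Ka \<ge> 1" unfolding Ka_def using tau_pos by simp

lemma Mlev_nonneg: "Mlev i \<ge> 0"
proof -
  have "M1 \<ge> 0" "D0 \<ge> 0" unfolding M1_def D0_def using Cb_pos Ka_ge1 tau_pos
    by (auto intro!: add_nonneg_nonneg mult_nonneg_nonneg)
  then show ?thesis by (induction i) (use tau_pos in auto)
qed

lemma Mlev_le_Msum: "i < k \<Longrightarrow> Mlev i \<le> Msum"
  unfolding Msum_def using Mlev_nonneg by (intro member_le_sum) auto

lemma regime1_facts:
  assumes g: "regime1 u n"
  shows "regime0 u n" "Msum * tau * ratio u n \<le> 1" "Ka * ratio u n \<le> 1/2"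
    "(real L * Cb * tau + Ka) * ratio u n \<le> 1" "16 * real k * Ka / real n \<le> 1" "4 * real k * E1 / real n \<le> 1"
proof -
  show g0: "regime0 u n" using g unfolding regime1_def by simp
  have n0: "0 < real n" using regime0_sizes[OF g0, of 0] by simp
  then show "Msum * tau * ratio u n \<le> 1" "Ka * ratio u n \<le> 1/2" "(real L * Cb * tau + Ka) * ratio u n \<le> 1"
    "16 * real k * Ka / real n \<le> 1" "4 * real k * E1 / real n \<le> 1"
    using g unfolding regime1_def ratio_def by (simp_all add: divide_simps)
qed

lemma level_error_scale:
  assumes g: "regime1 u n" and q: "q < k" and S: "S \<le> horizon u n"
  shows "Mlev q * ratio u n ^ e * real S / real n \<le> Mlev q * tau * ratio u n ^ Suc e"
    "Mlev q * tau * ratio u n ^ Suc e \<le> ratio u n ^ e"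
proof -
  note g0 = regime1_facts(1)[OF g]
  define x where "x = ratio u n"
  have x0: "0 < x" using regime0_ratio[OF g0] unfolding x_def by simp
  have "Mlev q * x ^ e * (real S / real n) \<le> Mlev q * x ^ e * (tau * x)"
    using regime0_ratio(4)[OF g0 S] Mlev_nonneg x0 unfolding x_def by (intro mult_left_mono) auto
  then show "Mlev q * ratio u n ^ e * real S / real n \<le> Mlev q * tau * ratio u n ^ Suc e"
    unfolding x_def by (simp add: mult_ac)
  have "Mlev q * tau * x \<le> Msum * tau * x"
    using Mlev_le_Msum[OF q] tau_pos x0 by (intro mult_right_mono) auto
  then have "Mlev q * tau * x \<le> 1" using regime1_facts(2)[OF g] unfolding x_def by linarith
  then have "(Mlev q * tau * x) * x ^ e \<le> 1 * x ^ e" using x0 by (intro mult_right_mono) auto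
  then show "Mlev q * tau * ratio u n ^ Suc e \<le> ratio u n ^ e" unfolding x_def by (simp add: mult_ac)
qed

(* Pascal's rule for apoly: the recursion the a-parameters satisfy to first order. *)
lemma apoly_Suc:
  "apoly n (Suc i) (Suc S) = apoly n (Suc i) S + (real L + real (Suc i)) / real n * apoly n i S"
proof -
  have "apoly n (Suc i) (Suc S)
      = cL * pochhammer (real L + 1) (Suc i) * (real (S choose i) + real (S choose Suc i)) / real n ^ Suc i"
    unfolding apoly_def by simp
  also have "\<dots> = apoly n (Suc i) S + cL * pochhammer (real L + 1) (Suc i) * real (S choose i) / real n ^ Suc i"
    unfolding apoly_def by (simp add: add_divide_distrib algebra_simps)
  also have "cL * pochhammer (real L + 1) (Suc i) * real (S choose i) / real n ^ Suc i
      = (real L + real (Suc i)) / real n * apoly n i S"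
    unfolding apoly_def pochhammer_Suc by (simp add: field_simps)
  finally show ?thesis .
qed

lemma pochhammer_le_pow: "i \<le> r - 1 \<Longrightarrow> pochhammer (real L + 1) i \<le> real k ^ i"
proof -
  assume i: "i \<le> r - 1"
  have "pochhammer (real L + 1) i = (\<Prod>l<i. real L + 1 + real l)"
    by (simp add: pochhammer_prod atLeast0LessThan)
  also have "\<dots> \<le> (\<Prod>l<i. real k)"
  proof (intro prod_mono conjI)
    fix l assume "l \<in> {..<i}"
    then have "L + 1 + l \<le> k" using i L_facts by auto
    then show "real L + 1 + real l \<le> real k" by linarith
  qed auto
  finally show ?thesis by simp
qed

lemma apoly_bound:
  assumes g: "regime0 u n" and S: "S \<le> horizon u n" and i: "i \<le> r - 1"
  shows "\<bar>apoly n i S\<bar> \<le> (Ka - 1) * ratio u n ^ i"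
proof -
  note xr = regime0_ratio[OF g]
  have n0: "0 < real n" using regime0_sizes[OF g, of 0] by simp
  have ik: "i \<le> k" using i rk by simp
  have binom: "real (S choose i) \<le> real S ^ i"
  proof (cases "i \<le> S")
    case True then show ?thesis using binomial_le_pow[OF True] by (metis of_nat_le_iff of_nat_power)
  qed (simp add: binomial_eq_0)
  have "real k ^ i \<le> real k ^ k" using L_facts(6) ik by (intro power_increasing) auto
  then have poch: "pochhammer (real L + 1) i \<le> real k ^ k" using pochhammer_le_pow[OF i] by linarith
  have "\<bar>apoly n i S\<bar> = \<bar>cL\<bar> * pochhammer (real L + 1) i * real (S choose i) / real n ^ i"
    unfolding apoly_def by (simp add: abs_mult pochhammer_nonneg)
  also have "\<dots> \<le> \<bar>cL\<bar> * real k ^ k * real S ^ i / real n ^ i"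
    using binom poch n0 by (intro divide_right_mono mult_mono) (auto simp: pochhammer_nonneg)
  also have "\<dots> = \<bar>cL\<bar> * real k ^ k * (real S / real n) ^ i" by (simp add: power_divide)
  also have "\<dots> \<le> \<bar>cL\<bar> * real k ^ k * ((1 + tau) ^ k * ratio u n ^ i)"
  proof -
    have "(real S / real n) ^ i \<le> (tau * ratio u n) ^ i"
      using xr(4)[OF S] n0 by (intro power_mono) auto
    also have "\<dots> \<le> (1 + tau) ^ i * ratio u n ^ i"
      using tau_pos xr by (simp add: power_mult_distrib mult_right_mono power_mono)
    also have "\<dots> \<le> (1 + tau) ^ k * ratio u n ^ i"
      using tau_pos xr ik by (intro mult_right_mono power_increasing) auto
    finally show ?thesis by (intro mult_left_mono) auto
  qed
  also have "\<dots> = (Ka - 1) * ratio u n ^ i" unfolding Ka_def by simp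
  finally show ?thesis .
qed

lemma acoef_Suc:
  "acoef u n (Suc S) j = acoef u n S j
     + ln (bern_mgf (real j / NN u n (horizon u n - Suc S)) (shift_diff k r (bcoef u n S) (acoef u n S) j))"
  unfolding acoef_def bcoef_def by (simp add: next_a_def)

end

context tilt_asymptotics begin

lemma first_level_shift:
  assumes g: "regime1 u n" and S: "S \<le> horizon u n"
    and IH: "\<bar>acoef u n S (L + 1) - apoly n 1 S\<bar> \<le> M1 * ratio u n * real S / real n"
  shows "\<bar>shift_diff k r (bcoef u n S) (acoef u n S) (L + 1) - real L * lam\<bar>
      \<le> (real L * Cb * tau + Ka) * ratio u n"
proof -
  note g0 = regime1_facts(1)[OF g]
  define x where "x = ratio u n"
  have "M1 * x * real S / real n \<le> x"
    using level_error_scale[OF g _ S, of 0 1] L_facts unfolding x_def by simp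
  moreover have "\<bar>apoly n 1 S\<bar> \<le> (Ka - 1) * x" using apoly_bound[OF g0 S, of 1] r2 unfolding x_def by simp
  ultimately have a: "\<bar>acoef u n S (L + 1)\<bar> \<le> Ka * x" using IH unfolding x_def by (simp add: algebra_simps)
  have "\<bar>bcoef u n S - lam\<bar> \<le> Cb * (real S / real n)" using bcoef_close[OF g0 S] by simp
  also have "\<dots> \<le> Cb * (tau * x)" using regime0_ratio(4)[OF g0 S] Cb_pos unfolding x_def by (intro mult_left_mono) auto
  finally have b: "real L * \<bar>bcoef u n S - lam\<bar> \<le> real L * (Cb * tau * x)" by (intro mult_left_mono) auto
  have "shift_diff k r (bcoef u n S) (acoef u n S) (L + 1) - real L * lam
      = real L * (bcoef u n S - lam) - acoef u n S (L + 1)"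
    unfolding shift_diff_def using L_facts by (simp add: algebra_simps)
  moreover have "\<bar>real L * (bcoef u n S - lam) - acoef u n S (L + 1)\<bar>
      \<le> real L * \<bar>bcoef u n S - lam\<bar> + \<bar>acoef u n S (L + 1)\<bar>"
    using abs_triangle_ineq4[of "real L * (bcoef u n S - lam)" "acoef u n S (L + 1)"] by (simp add: abs_mult)
  ultimately show ?thesis using a b unfolding x_def by (simp add: algebra_simps)
qed

lemma first_order_step_error:
  assumes g: "regime1 u n" and t: "t \<le> horizon u n" and j: "j \<le> k" and e: "\<bar>exp d - 1\<bar> \<le> E1"
  shows "\<bar>ln (bern_mgf (real j / NN u n t) d) - real j / NN u n t * (exp d - 1)\<bar>
      \<le> 8 * (real k)\<^sup>2 * E1\<^sup>2 * ratio u n / real n"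
proof -
  note gf = regime1_facts[OF g]
  define x where "x = ratio u n"
  define s where "s = real j / NN u n t"
  define z where "z = s * (exp d - 1)"
  have n0: "0 < real n" using regime0_sizes[OF gf(1) t] by simp
  have x0: "1 / real n \<le> x" using regime0_ratio[OF gf(1)] unfolding x_def by auto
  note sb = level_rate_bounds[OF gf(1) t j, folded s_def]
  have "s * \<bar>exp d - 1\<bar> \<le> (2 * real k / real n) * E1" using sb e by (intro mult_mono) auto
  then have zb: "\<bar>z\<bar> \<le> 2 * real k * E1 / real n" unfolding z_def using sb by (simp add: abs_mult)
  have "2 * real k * E1 / real n = (4 * real k * E1 / real n) / 2" by simp
  then have "\<bar>z\<bar> \<le> 1/2" using zb gf(6) by linarith
  then have "\<bar>ln (bern_mgf s d) - z\<bar> \<le> 2 * z\<^sup>2" unfolding z_def using sb by (intro log_bern_linear) auto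
  also have "\<dots> \<le> 2 * (2 * real k * E1 / real n)\<^sup>2" using power_mono[OF zb, of 2] by simp
  also have "\<dots> = 8 * (real k)\<^sup>2 * E1\<^sup>2 * (1 / real n) / real n" by (simp add: power2_eq_square field_simps)
  also have "\<dots> \<le> 8 * (real k)\<^sup>2 * E1\<^sup>2 * x / real n"
    using x0 n0 by (intro divide_right_mono mult_left_mono) auto
  finally show ?thesis unfolding s_def z_def x_def .
qed

lemma first_level_increment:
  assumes g: "regime1 u n" and t: "t \<le> horizon u n"
    and d: "\<bar>d - real L * lam\<bar> \<le> (real L * Cb * tau + Ka) * ratio u n"
  shows "\<bar>ln (bern_mgf (real (L + 1) / NN u n t) d) - (real L + 1) / real n * cL\<bar> \<le> M1 * ratio u n / real n"
proof -
  note gf = regime1_facts[OF g]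
  define x where "x = ratio u n"
  define s where "s = real (L + 1) / NN u n t"
  define z where "z = s * (exp d - 1)"
  have n0: "0 < real n" using regime0_sizes[OF gf(1) t] by simp
  note sb = level_rate_bounds[OF gf(1) t L_facts(5), folded s_def]
  have d1: "\<bar>d - real L * lam\<bar> \<le> 1" using d gf(4) by linarith
  have "\<bar>exp d - 1\<bar> \<le> E1"
  proof -
    have "d \<le> real L * \<bar>lam\<bar> + 1" using d1 abs_ge_self[of lam] by (smt (verit) mult_left_mono of_nat_0_le_iff)
    then show ?thesis unfolding E1_def using exp_gt_zero[of d] exp_le_cancel_iff by (smt (verit))
  qed
  then have lin: "\<bar>ln (bern_mgf s d) - z\<bar> \<le> 8 * (real k)\<^sup>2 * E1\<^sup>2 * x / real n"
    using first_order_step_error[OF g t L_facts(5)] unfolding s_def z_def x_def by blast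
  have tilt_err: "\<bar>z - s * cL\<bar> \<le> 4 * real k * exp (real L * \<bar>lam\<bar>) * (real L * Cb * tau + Ka) * x / real n"
  proof -
    have "z - s * cL = s * (exp d - exp (real L * lam))" unfolding z_def cL_def by (simp add: algebra_simps)
    then have "\<bar>z - s * cL\<bar> = s * \<bar>exp d - exp (real L * lam)\<bar>" using sb by (simp add: abs_mult)
    also have "\<dots> \<le> (2 * real k / real n) * (2 * exp (real L * \<bar>lam\<bar>) * ((real L * Cb * tau + Ka) * x))"
    proof -
      have "exp (real L * lam) \<le> exp (real L * \<bar>lam\<bar>)" by (simp add: mult_left_mono)
      then have "2 * exp (real L * lam) * \<bar>d - real L * lam\<bar> \<le> 2 * exp (real L * \<bar>lam\<bar>) * ((real L * Cb * tau + Ka) * x)"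
        using d unfolding x_def by (intro mult_mono) auto
      then show ?thesis using sb exp_lipschitz[OF d1] by (intro mult_mono) auto
    qed
    finally show ?thesis by (simp add: field_simps)
  qed
  have rate_err: "\<bar>s * cL - (real L + 1) / real n * cL\<bar> \<le> 2 * real k * (1 + tau) * \<bar>cL\<bar> * x / real n"
  proof -
    have "\<bar>s * cL - (real L + 1) / real n * cL\<bar> = \<bar>s - real (L + 1) / real n\<bar> * \<bar>cL\<bar>"
      by (simp add: abs_mult[symmetric] algebra_simps)
    also have "\<dots> \<le> 2 * real k * (1 + tau) * x / real n * \<bar>cL\<bar>"
      using level_rate_close[OF gf(1) t L_facts(5)] unfolding s_def x_def by (intro mult_right_mono) auto
    finally show ?thesis by (simp add: mult_ac)
  qed
  have "\<bar>ln (bern_mgf s d) - (real L + 1) / real n * cL\<bar>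
      \<le> \<bar>ln (bern_mgf s d) - z\<bar> + \<bar>z - s * cL\<bar> + \<bar>s * cL - (real L + 1) / real n * cL\<bar>"
    by (rule abs_diff_chain3)
  also have "\<dots> \<le> M1 * x / real n"
  proof -
    have "M1 * x / real n = 8 * (real k)\<^sup>2 * E1\<^sup>2 * x / real n
        + 4 * real k * exp (real L * \<bar>lam\<bar>) * (real L * Cb * tau + Ka) * x / real n
        + 2 * real k * (1 + tau) * \<bar>cL\<bar> * x / real n"
      unfolding M1_def using n0 by (simp add: field_simps)
    then show ?thesis using lin tilt_err rate_err by linarith
  qed
  finally show ?thesis unfolding s_def x_def .
qed

lemma acoef_first_level:
  assumes g: "regime1 u n"
  shows "S \<le> horizon u n \<Longrightarrow> \<bar>acoef u n S (L + 1) - apoly n 1 S\<bar> \<le> M1 * ratio u n * real S / real n"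
proof (induction S)
  case 0
  then show ?case by (simp add: acoef_def apoly_def)
next
  case (Suc S)
  then have S: "S \<le> horizon u n" and IH: "\<bar>acoef u n S (L + 1) - apoly n 1 S\<bar> \<le> M1 * ratio u n * real S / real n"
    by auto
  have step: "\<bar>acoef u n (Suc S) (L + 1) - acoef u n S (L + 1) - (real L + 1) / real n * cL\<bar> \<le> M1 * ratio u n / real n"
    using first_level_increment[OF g _ first_level_shift[OF g S IH], of "horizon u n - Suc S"]
    unfolding acoef_Suc by simp
  have "apoly n 1 (Suc S) = apoly n 1 S + (real L + 1) / real n * cL"
    using apoly_Suc[of n 0 S] by (simp add: apoly_def)
  then show ?case using IH step by (simp add: add_divide_distrib algebra_simps)
qed

lemma next_level_shift:
  assumes g: "regime1 u n" and i: "1 \<le> i" "Suc i \<le> r - 1" and S: "S \<le> horizon u n"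
    and prev: "\<bar>acoef u n S (L + i) - apoly n i S\<bar> \<le> Mlev (i - 1) * ratio u n ^ i * real S / real n"
    and IH: "\<bar>acoef u n S (L + Suc i) - apoly n (Suc i) S\<bar> \<le> Mlev i * ratio u n ^ Suc i * real S / real n"
  shows "\<bar>shift_diff k r (bcoef u n S) (acoef u n S) (L + Suc i)\<bar> \<le> 2 * Ka * ratio u n ^ i"
    "\<bar>shift_diff k r (bcoef u n S) (acoef u n S) (L + Suc i) - apoly n i S\<bar>
       \<le> (Mlev (i - 1) * tau + Ka) * ratio u n ^ Suc i"
proof -
  note g0 = regime1_facts(1)[OF g]
  define x where "x = ratio u n"
  have x0: "0 < x" "x \<le> 1" using regime0_ratio[OF g0] unfolding x_def by auto
  have ik: "i - 1 < k" "i < k" using i L_facts by linarith+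
  have d: "shift_diff k r (bcoef u n S) (acoef u n S) (L + Suc i) = acoef u n S (L + i) - acoef u n S (L + Suc i)"
    unfolding shift_diff_def using L_facts i by auto
  have prev': "\<bar>acoef u n S (L + i) - apoly n i S\<bar> \<le> Mlev (i - 1) * tau * x ^ Suc i"
    using prev level_error_scale(1)[OF g ik(1) S, of i] unfolding x_def by linarith
  have "\<bar>acoef u n S (L + i)\<bar> \<le> Ka * x ^ i"
    using prev' level_error_scale(2)[OF g ik(1) S, of i] apoly_bound[OF g0 S, of i] i
    unfolding x_def by (simp add: algebra_simps)
  moreover have a_next: "\<bar>acoef u n S (L + Suc i)\<bar> \<le> Ka * x ^ Suc i"
    using IH level_error_scale[OF g ik(2) S, of "Suc i"] apoly_bound[OF g0 S, of "Suc i"] i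
    unfolding x_def by (simp add: algebra_simps)
  moreover have "Ka * x ^ Suc i \<le> Ka * x ^ i"
    using x0 Ka_ge1 by (intro mult_left_mono power_decreasing) auto
  ultimately show "\<bar>shift_diff k r (bcoef u n S) (acoef u n S) (L + Suc i)\<bar> \<le> 2 * Ka * ratio u n ^ i"
    unfolding d x_def by linarith
  show "\<bar>shift_diff k r (bcoef u n S) (acoef u n S) (L + Suc i) - apoly n i S\<bar>
       \<le> (Mlev (i - 1) * tau + Ka) * ratio u n ^ Suc i"
    using prev' a_next unfolding d x_def by (simp add: algebra_simps)
qed

lemma Mlev_rec: "1 \<le> i \<Longrightarrow> Mlev i = 2 * real k * tau * Mlev (i - 1) + D0"
  by (cases i) auto

lemma second_order_step_error:
  assumes g: "regime1 u n" and i: "1 \<le> i" and t: "t \<le> horizon u n" and j: "j \<le> k"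
    and d: "\<bar>d\<bar> \<le> 2 * Ka * ratio u n ^ i"
  shows "\<bar>ln (bern_mgf (real j / NN u n t) d) - real j / NN u n t * d\<bar>
      \<le> (128 * (real k)\<^sup>2 * Ka\<^sup>2 + 8 * real k * Ka\<^sup>2) * ratio u n ^ Suc i / real n"
proof -
  note gf = regime1_facts[OF g]
  define x where "x = ratio u n"
  define s where "s = real j / NN u n t"
  have n0: "0 < real n" using regime0_sizes[OF gf(1) t] by simp
  have x0: "0 < x" "x \<le> 1" "1 / real n \<le> x" using regime0_ratio[OF gf(1)] unfolding x_def by auto
  have xpow: "x ^ m \<le> x ^ l" if "l \<le> m" for l m using x0 that by (intro power_decreasing) auto
  note sb = level_rate_bounds[OF gf(1) t j, folded s_def]
  define y where "y = x ^ i"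
  have y: "0 \<le> y" "y \<le> x" "y \<le> 1" using xpow[of 1 i] xpow[of 0 i] x0 i unfolding y_def by auto
  have y2: "y\<^sup>2 \<le> x ^ Suc i"
    using xpow[of "Suc i" "2 * i"] i unfolding y_def by (simp add: power_even_eq[symmetric] mult.commute)
  have y2n: "y\<^sup>2 / real n \<le> x ^ Suc i"
  proof -
    have "y\<^sup>2 * (1 / real n) \<le> y\<^sup>2 * x" using x0 by (intro mult_left_mono) auto
    then have "y\<^sup>2 / real n \<le> y\<^sup>2 * x" by simp
    also have "\<dots> \<le> x ^ Suc i * 1" using y2 x0 y by (intro mult_mono) auto
    finally show ?thesis by simp
  qed
  have "Ka * y \<le> Ka * x" using y Ka_ge1 by (intro mult_left_mono) auto
  then have delta1: "2 * Ka * y \<le> 1" using gf(3) unfolding x_def by linarith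
  have "real k * (Ka * y) \<le> real k * (Ka * 1)" using y Ka_ge1 by (intro mult_left_mono) auto
  then have "2 * (2 * real k / real n) * (2 * Ka * y) \<le> 8 * real k * Ka / real n"
    using n0 by (simp add: divide_simps)
  then have small: "2 * (2 * real k / real n) * (2 * Ka * y) \<le> 1/2" using gf(5) by linarith
  have "\<bar>ln (bern_mgf s d) - s * d\<bar>
      \<le> 2 * (2 * (2 * real k / real n) * (2 * Ka * y))\<^sup>2 + (2 * real k / real n) * (2 * Ka * y)\<^sup>2"
  proof -
    have "2 * real k / real n \<le> 1" using regime0_sizes(5)[OF gf(1) t] by linarith
    moreover have "\<bar>d\<bar> \<le> 2 * Ka * y" using d unfolding x_def y_def .
    ultimately show ?thesis using log_bern_quadratic[OF sb(1) sb(2) _ _ delta1 small] by blast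
  qed
  also have "\<dots> = (128 * (real k)\<^sup>2 * Ka\<^sup>2 * (y\<^sup>2 / real n) + 8 * real k * Ka\<^sup>2 * y\<^sup>2) / real n"
    using n0 by (simp add: power2_eq_square field_simps)
  also have "\<dots> \<le> (128 * (real k)\<^sup>2 * Ka\<^sup>2 * x ^ Suc i + 8 * real k * Ka\<^sup>2 * x ^ Suc i) / real n"
    using y2 y2n n0 by (intro divide_right_mono add_mono mult_left_mono) auto
  finally show ?thesis unfolding s_def x_def by (simp add: algebra_simps)
qed

lemma next_level_increment:
  assumes g: "regime1 u n" and i: "1 \<le> i" and t: "t \<le> horizon u n" and j: "L + Suc i \<le> k"
    and d: "\<bar>d\<bar> \<le> 2 * Ka * ratio u n ^ i" and dA: "\<bar>d - A\<bar> \<le> (Mlev (i - 1) * tau + Ka) * ratio u n ^ Suc i"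
    and A: "\<bar>A\<bar> \<le> Ka * ratio u n ^ i"
  shows "\<bar>ln (bern_mgf (real (L + Suc i) / NN u n t) d) - real (L + Suc i) / real n * A\<bar>
      \<le> Mlev i * ratio u n ^ Suc i / real n"
proof -
  note gf = regime1_facts[OF g]
  define x where "x = ratio u n"
  define s where "s = real (L + Suc i) / NN u n t"
  have n0: "0 < real n" using regime0_sizes[OF gf(1) t] by simp
  note sb = level_rate_bounds[OF gf(1) t j, folded s_def]
  have quad: "\<bar>ln (bern_mgf s d) - s * d\<bar> \<le> (128 * (real k)\<^sup>2 * Ka\<^sup>2 + 8 * real k * Ka\<^sup>2) * x ^ Suc i / real n"
    using second_order_step_error[OF g i t j d] unfolding s_def x_def .
  have shift_err: "\<bar>s * d - s * A\<bar> \<le> 2 * real k * (Mlev (i - 1) * tau + Ka) * x ^ Suc i / real n"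
  proof -
    have "\<bar>s * d - s * A\<bar> = s * \<bar>d - A\<bar>" using sb by (simp add: abs_mult right_diff_distrib[symmetric])
    also have "\<dots> \<le> (2 * real k / real n) * ((Mlev (i - 1) * tau + Ka) * x ^ Suc i)"
      using sb dA unfolding x_def by (intro mult_mono) auto
    finally show ?thesis by simp
  qed
  have rate_err: "\<bar>s * A - real (L + Suc i) / real n * A\<bar> \<le> 2 * real k * (1 + tau) * Ka * x ^ Suc i / real n"
  proof -
    have "\<bar>s * A - real (L + Suc i) / real n * A\<bar> = \<bar>s - real (L + Suc i) / real n\<bar> * \<bar>A\<bar>"
      by (simp add: abs_mult[symmetric] left_diff_distrib)
    also have "\<dots> \<le> (2 * real k * (1 + tau) * x / real n) * (Ka * x ^ i)"
      using level_rate_close[OF gf(1) t j] A unfolding s_def x_def by (intro mult_mono) auto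
    finally show ?thesis by (simp add: mult_ac)
  qed
  have "\<bar>ln (bern_mgf s d) - real (L + Suc i) / real n * A\<bar>
      \<le> \<bar>ln (bern_mgf s d) - s * d\<bar> + \<bar>s * d - s * A\<bar> + \<bar>s * A - real (L + Suc i) / real n * A\<bar>"
    by (rule abs_diff_chain3)
  also have "\<dots> \<le> Mlev i * x ^ Suc i / real n"
  proof -
    have "Mlev i * x ^ Suc i / real n = (128 * (real k)\<^sup>2 * Ka\<^sup>2 + 8 * real k * Ka\<^sup>2) * x ^ Suc i / real n
        + 2 * real k * (Mlev (i - 1) * tau + Ka) * x ^ Suc i / real n
        + 2 * real k * (1 + tau) * Ka * x ^ Suc i / real n"
      unfolding Mlev_rec[OF i] D0_def using n0 by (simp add: field_simps)
    then show ?thesis using quad shift_err rate_err by linarith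
  qed
  finally show ?thesis unfolding s_def x_def .
qed

lemma acoef_next_level:
  assumes g: "regime1 u n" and i: "1 \<le> i" "Suc i \<le> r - 1"
    and prev: "\<And>S. S \<le> horizon u n \<Longrightarrow>
       \<bar>acoef u n S (L + i) - apoly n i S\<bar> \<le> Mlev (i - 1) * ratio u n ^ i * real S / real n"
  shows "S \<le> horizon u n \<Longrightarrow>
    \<bar>acoef u n S (L + Suc i) - apoly n (Suc i) S\<bar> \<le> Mlev i * ratio u n ^ Suc i * real S / real n"
proof (induction S)
  case 0
  then show ?case by (simp add: acoef_def apoly_def)
next
  case (Suc S)
  then have S: "S \<le> horizon u n"
    and IH: "\<bar>acoef u n S (L + Suc i) - apoly n (Suc i) S\<bar> \<le> Mlev i * ratio u n ^ Suc i * real S / real n"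
    by auto
  note shift = next_level_shift[OF g i S prev[OF S] IH]
  have "0 \<le> ratio u n ^ i" using regime0_ratio(1)[OF regime1_facts(1)[OF g]] by simp
  then have A: "\<bar>apoly n i S\<bar> \<le> Ka * ratio u n ^ i"
    using apoly_bound[OF regime1_facts(1)[OF g] S, of i] i by (simp add: algebra_simps)
  have j: "L + Suc i \<le> k" using i L_facts by linarith
  have step: "\<bar>acoef u n (Suc S) (L + Suc i) - acoef u n S (L + Suc i) - real (L + Suc i) / real n * apoly n i S\<bar>
      \<le> Mlev i * ratio u n ^ Suc i / real n"
    using next_level_increment[OF g i(1) _ j shift A, of "horizon u n - Suc S"] unfolding acoef_Suc by simp
  have "apoly n (Suc i) (Suc S) = apoly n (Suc i) S + real (L + Suc i) / real n * apoly n i S"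
    using apoly_Suc[of n i S] by simp
  then show ?case using IH step by (simp add: add_divide_distrib algebra_simps)
qed

lemma acoef_levels:
  assumes g: "regime1 u n"
  shows "1 \<le> i \<Longrightarrow> i \<le> r - 1 \<Longrightarrow> S \<le> horizon u n \<Longrightarrow>
    \<bar>acoef u n S (L + i) - apoly n i S\<bar> \<le> Mlev (i - 1) * ratio u n ^ i * real S / real n"
proof (induction i arbitrary: S)
  case (Suc i)
  show ?case
  proof (cases "i = 0")
    case True
    then show ?thesis using acoef_first_level[OF g Suc.prems(3)] by simp
  next
    case False
    then show ?thesis using acoef_next_level[OF g _ _ Suc.IH] Suc.prems by simp
  qed
qed simp

end

context tilt_asymptotics begin

definition trials :: "(nat \<Rightarrow> nat) \<Rightarrow> nat \<Rightarrow> nat" where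
  "trials u n = nat \<lfloor>mu * real n ^ (r - 1) / real (u n) ^ (r - 2)\<rfloor>"
definition trials_exact :: "(nat \<Rightarrow> nat) \<Rightarrow> nat \<Rightarrow> real" where
  "trials_exact u n = mu * real n ^ (r - 1) / real (u n) ^ (r - 2)"

(* Limit weight of level L+i: binom(k, r-1) binom(r-1, i); summing weight i tau^i gives
   binom(k, r-1) (1+tau)^(r-1). *)
definition weight :: "nat \<Rightarrow> real" where "weight i = real (k choose (r - 1)) * real ((r - 1) choose i)"

definition regime2 :: "(nat \<Rightarrow> nat) \<Rightarrow> nat \<Rightarrow> bool" where
  "regime2 u n \<longleftrightarrow> regime1 u n \<and> 4 * real k * (real (u n) + real k) \<le> real n \<and> 4 * (real k)\<^sup>2 \<le> real (u n)
     \<and> 4 * real k * (real k + 1) \<le> tau * real (u n) \<and> 2 * (real k)\<^sup>2 \<le> real n \<and> 4 \<le> mu * real n"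

definition epsQ :: "(nat \<Rightarrow> nat) \<Rightarrow> nat \<Rightarrow> real" where
  "epsQ u n = 1 / (mu * real n) + real k * (real (u n) + real k) / real n + (real k)\<^sup>2 / real (u n)
     + real k * (real k + 1) / (tau * real (u n)) + 2 * (real k)\<^sup>2 / real n"

lemma regime2_regime1: "regime2 u n \<Longrightarrow> regime1 u n" unfolding regime2_def by simp

lemma regime2_regime0: "regime2 u n \<Longrightarrow> regime0 u n" unfolding regime2_def regime1_def by simp

lemma trials_bounds:
  assumes g: "regime0 u n"
  shows "0 < trials_exact u n" "real (trials u n) \<le> trials_exact u n" "trials_exact u n - 1 \<le> real (trials u n)"
    "mu * real n \<le> trials_exact u n"
proof -
  note sz = regime0_sizes[OF g, of 0]
  have U: "1 \<le> real (u n)" "real (u n) \<le> real n" using g sz unfolding regime0_def by auto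
  show pos: "0 < trials_exact u n" unfolding trials_exact_def using mu_pos sz U by simp
  show "real (trials u n) \<le> trials_exact u n" "trials_exact u n - 1 \<le> real (trials u n)"
    using pos unfolding trials_def trials_exact_def by linarith+
  have r': "r - 1 = Suc (r - 2)" using r2 by simp
  have "real (u n) ^ (r - 2) \<le> real n ^ (r - 2)" using U by (intro power_mono) auto
  then have "mu * real n * real (u n) ^ (r - 2) \<le> mu * real n * real n ^ (r - 2)"
    using mu_pos sz by (intro mult_left_mono) auto
  then show "mu * real n \<le> trials_exact u n"
    unfolding trials_exact_def r' using U by (simp add: divide_simps mult_ac)
qed

lemma weight_fact: "i \<le> r - 1 \<Longrightarrow> weight i = fact k / (fact L * fact i * fact (r - 1 - i))"
proof -
  assume i: "i \<le> r - 1"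
  have "r - 1 \<le> k" "k - (r - 1) = L" using rk L_facts by auto
  then show ?thesis unfolding weight_def using i by (simp add: binomial_fact field_simps)
qed

(* The p_j form a probability vector (Vandermonde's identity). *)
lemma pj_nonneg: "0 \<le> pj k u n j" unfolding pj_def by simp

lemma pj_sum: assumes "u n \<le> n" "k \<le> n" shows "(\<Sum>j\<le>k. pj k u n j) = 1"
proof -
  have "(\<Sum>j\<le>k. (n - u n choose j) * (u n choose (k - j))) = (n - u n + u n) choose k" by (rule vandermonde)
  also have "n - u n + u n = n" using assms by simp
  finally have v: "(\<Sum>j\<le>k. real (n - u n choose j) * real (u n choose (k - j))) = real (n choose k)"
    by (metis (mono_tags, lifting) of_nat_mult of_nat_sum sum.cong)
  have "0 < real (n choose k)" using assms by simp
  then show ?thesis unfolding pj_def using v by (simp add: sum_divide_distrib[symmetric])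
qed

lemma initial_weight_falling:
  assumes i: "i \<le> r - 1" and kn: "k \<le> n"
  shows "m * pj k u n (L + i) * pochhammer (real L + 1) i * real (T choose i) / real n ^ i
    = m * (\<Prod>l<L + i. real (n - u n) - real l) * (\<Prod>l<r - 1 - i. real (u n) - real l) * (\<Prod>l<i. real T - real l)
        / ((\<Prod>l<k. real n - real l) * real n ^ i) * weight i"
proof -
  define A1 where "A1 = (\<Prod>l<L + i. real (n - u n) - real l)"
  define A2 where "A2 = (\<Prod>l<r - 1 - i. real (u n) - real l)"
  define A3 where "A3 = (\<Prod>l<k. real n - real l)"
  define A4 where "A4 = (\<Prod>l<i. real T - real l)"
  have b1: "real (n - u n choose (L + i)) = A1 / fact (L + i)" unfolding A1_def by (rule binomial_falling_prod)
  have "k - (L + i) = r - 1 - i" using i L_facts by simp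
  then have b2: "real (u n choose (k - (L + i))) = A2 / fact (r - 1 - i)"
    unfolding A2_def by (simp add: binomial_falling_prod)
  have b3: "real (n choose k) = A3 / fact k" unfolding A3_def by (rule binomial_falling_prod)
  have b4: "real (T choose i) = A4 / fact i" unfolding A4_def by (rule binomial_falling_prod)
  have b5: "pochhammer (real L + 1) i = fact (L + i) / fact L"
    using pochhammer_fact[of L i] by (simp add: field_simps)
  have A3: "A3 \<noteq> 0" using b3 kn by (auto simp: field_simps)
  have "m * pj k u n (L + i) * pochhammer (real L + 1) i * real (T choose i) / real n ^ i
    = m * ((A1 / fact (L + i)) * (A2 / fact (r - 1 - i)) / (A3 / fact k)) * (fact (L + i) / fact L) * (A4 / fact i) / real n ^ i"
    unfolding pj_def b1 b2 b3 b4 b5 ..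
  also have "\<dots> = m * A1 * A2 * A4 / (A3 * real n ^ i) * (fact k / (fact L * fact i * fact (r - 1 - i)))"
    using A3 by (simp add: field_simps)
  finally show ?thesis unfolding weight_fact[OF i] A1_def A2_def A3_def A4_def .
qed

end

context tilt_asymptotics begin

lemma regime2_sizes:
  assumes g: "regime2 u n"
  shows "1 \<le> real (u n)" "0 < real n" "u n \<le> n" "real (u n) + real k \<le> real n" "real k \<le> real (u n)"
    "real k + 1 \<le> tau * real (u n)" "real k \<le> real n" "1 \<le> real k"
proof -
  note g0 = regime2_regime0[OF g]
  note sz = regime0_sizes[OF g0, of 0]
  have k1: "1 \<le> real k" using L_facts by simp
  have c: "4 * real k * (real (u n) + real k) \<le> real n" "4 * (real k)\<^sup>2 \<le> real (u n)"
    "4 * real k * (real k + 1) \<le> tau * real (u n)" "2 * (real k)\<^sup>2 \<le> real n"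
    using g unfolding regime2_def by auto
  have kk: "real k \<le> (real k)\<^sup>2" using k1 by (simp add: power2_eq_square)
  have "(real (u n) + real k) * 1 \<le> (real (u n) + real k) * (4 * real k)" using k1 by (intro mult_left_mono) auto
  then show "real (u n) + real k \<le> real n" using c(1) by (simp add: mult.commute)
  have "(real k + 1) * 1 \<le> (real k + 1) * (4 * real k)" using k1 by (intro mult_left_mono) auto
  then show "real k + 1 \<le> tau * real (u n)" using c(3) by (simp add: algebra_simps)
  show "real k \<le> real (u n)" "real k \<le> real n" using kk c by linarith+
  show "1 \<le> real (u n)" using g0 unfolding regime0_def by simp
  show "0 < real n" "u n \<le> n" "1 \<le> real k" using sz k1 by auto
qed

lemma regime2_errors:
  assumes g: "regime2 u n"
  shows "0 \<le> 1 / (mu * real n)" "1 / (mu * real n) \<le> 1/4"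
    "0 \<le> real k * (real (u n) + real k) / real n" "real k * (real (u n) + real k) / real n \<le> 1/4"
    "0 \<le> (real k)\<^sup>2 / real (u n)" "(real k)\<^sup>2 / real (u n) \<le> 1/4"
    "0 \<le> real k * (real k + 1) / (tau * real (u n))" "real k * (real k + 1) / (tau * real (u n)) \<le> 1/4"
    "0 \<le> (real k)\<^sup>2 / real n" "(real k)\<^sup>2 / real n \<le> 1/2"
proof -
  note sz = regime2_sizes[OF g]
  have c: "4 * real k * (real (u n) + real k) \<le> real n" "4 * (real k)\<^sup>2 \<le> real (u n)"
    "4 * real k * (real k + 1) \<le> tau * real (u n)" "2 * (real k)\<^sup>2 \<le> real n" "4 \<le> mu * real n"
    using g unfolding regime2_def by auto
  have pos: "0 < real n" "0 < real (u n)" "0 < tau * real (u n)" using sz tau_pos by auto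
  show "0 \<le> 1 / (mu * real n)" "0 \<le> real k * (real (u n) + real k) / real n" "0 \<le> (real k)\<^sup>2 / real (u n)"
    "0 \<le> real k * (real k + 1) / (tau * real (u n))" "0 \<le> (real k)\<^sup>2 / real n"
    using pos mu_pos by auto
  show "1 / (mu * real n) \<le> 1/4" using c(5) by simp
  show "real k * (real (u n) + real k) / real n \<le> 1/4" using c(1) pos by (simp add: divide_simps)
  show "(real k)\<^sup>2 / real (u n) \<le> 1/4" using c(2) pos by (simp add: divide_simps)
  show "real k * (real k + 1) / (tau * real (u n)) \<le> 1/4" using c(3) pos by (simp add: divide_simps)
  show "(real k)\<^sup>2 / real n \<le> 1/2" using c(4) pos by (simp add: divide_simps)
qed

lemma trials_relative:
  assumes g: "regime2 u n"
  shows "trials_exact u n * (1 - 1 / (mu * real n)) \<le> real (trials u n)"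
proof -
  note tb = trials_bounds[OF regime2_regime0[OF g]]
  have "trials_exact u n * (1 / (mu * real n)) \<ge> 1"
    using tb(4) mu_pos regime2_sizes(2)[OF g] by (simp add: divide_simps)
  then show ?thesis using tb(3) by (simp add: algebra_simps)
qed

lemma trials_exact_scaling:
  assumes i: "i \<le> r - 1" and U: "0 < real (u n)"
  shows "trials_exact u n * real n ^ (L + i) * real (u n) ^ (r - 1 - i) * (tau * real (u n)) ^ i
    = mu * tau ^ i * real (u n) * real n ^ (k + i)"
proof -
  define d where "d = r - 2"
  have q: "Suc d + (L + i) = k + i" "(r - 1 - i) + i = Suc d" "r - 1 = Suc d" "r - 2 = d"
    using i L_facts r2 unfolding d_def by auto
  have "trials_exact u n * real n ^ (L + i) * real (u n) ^ (r - 1 - i) * (tau * real (u n)) ^ i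
      = mu * (real n ^ Suc d * real n ^ (L + i)) * ((real (u n) ^ (r - 1 - i) * real (u n) ^ i) / real (u n) ^ d) * tau ^ i"
    unfolding trials_exact_def q(3,4) by (simp add: power_mult_distrib)
  also have "real n ^ Suc d * real n ^ (L + i) = real n ^ (k + i)" by (simp only: power_add[symmetric] q(1))
  also have "real (u n) ^ (r - 1 - i) * real (u n) ^ i = real (u n) ^ Suc d" by (simp only: power_add[symmetric] q(2))
  also have "real (u n) ^ Suc d / real (u n) ^ d = real (u n)" using U by simp
  finally show ?thesis by simp
qed

lemma falling_product_bounds:
  assumes g: "regime2 u n" and i: "i \<le> r - 1"
  shows "real n ^ (L + i) * (1 - real k * (real (u n) + real k) / real n) \<le> (\<Prod>l<L + i. real (n - u n) - real l)"
    "(\<Prod>l<L + i. real (n - u n) - real l) \<le> real n ^ (L + i)"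
    "real (u n) ^ (r - 1 - i) * (1 - (real k)\<^sup>2 / real (u n)) \<le> (\<Prod>l<r - 1 - i. real (u n) - real l)"
    "(\<Prod>l<r - 1 - i. real (u n) - real l) \<le> real (u n) ^ (r - 1 - i)"
    "real n ^ k * (1 - (real k)\<^sup>2 / real n) \<le> (\<Prod>l<k. real n - real l)"
    "(\<Prod>l<k. real n - real l) \<le> real n ^ k"
    "(tau * real (u n)) ^ i * (1 - real k * (real k + 1) / (tau * real (u n))) \<le> (\<Prod>l<i. real (horizon u n) - real l)"
    "(\<Prod>l<i. real (horizon u n) - real l) \<le> (tau * real (u n)) ^ i"
proof -
  note sz = regime2_sizes[OF g]
  have jk: "L + i \<le> k" "r - 1 - i \<le> k" "i \<le> k" using i L_facts by auto
  have tU: "0 < tau * real (u n)" using tau_pos sz by simp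
  have e: "real j * (D / N) \<le> real k * D / N" if "j \<le> k" "0 \<le> D" "0 < N" for j and D N :: real
    using that by (simp add: divide_simps mult_right_mono)
  have low1: "real n - (real (u n) + real k) \<le> real (n - u n) - real l" if "l < L + i" for l
    using that jk sz by (simp add: of_nat_diff)
  show "real n ^ (L + i) * (1 - real k * (real (u n) + real k) / real n) \<le> (\<Prod>l<L + i. real (n - u n) - real l)"
    "(\<Prod>l<L + i. real (n - u n) - real l) \<le> real n ^ (L + i)"
    using falling_prod_bounds[OF sz(2) _ sz(4) _ low1 e[OF jk(1)]] sz by (auto simp: of_nat_diff)
  have low2: "real (u n) - real k \<le> real (u n) - real l" if "l < r - 1 - i" for l
    using that jk by simp
  show "real (u n) ^ (r - 1 - i) * (1 - (real k)\<^sup>2 / real (u n)) \<le> (\<Prod>l<r - 1 - i. real (u n) - real l)"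
    "(\<Prod>l<r - 1 - i. real (u n) - real l) \<le> real (u n) ^ (r - 1 - i)"
    using falling_prod_bounds[OF _ _ sz(5) _ low2 e[OF jk(2)]] sz by (auto simp: power2_eq_square)
  have low3: "real n - real k \<le> real n - real l" if "l < k" for l using that by simp
  show "real n ^ k * (1 - (real k)\<^sup>2 / real n) \<le> (\<Prod>l<k. real n - real l)"
    "(\<Prod>l<k. real n - real l) \<le> real n ^ k"
    using falling_prod_bounds[OF sz(2) _ sz(7) _ low3 e[OF order_refl]] sz(2) by (auto simp: power2_eq_square)
  have low4: "tau * real (u n) - (real k + 1) \<le> real (horizon u n) - real l" if "l < i" for l
    using that jk horizon_bounds(2)[of u n] by simp
  show "(tau * real (u n)) ^ i * (1 - real k * (real k + 1) / (tau * real (u n))) \<le> (\<Prod>l<i. real (horizon u n) - real l)"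
    "(\<Prod>l<i. real (horizon u n) - real l) \<le> (tau * real (u n)) ^ i"
    using falling_prod_bounds[OF tU _ sz(6) horizon_bounds(1) low4 e[OF jk(3)]] tU by auto
qed

end

context tilt_asymptotics begin

lemma falling_ratio_close:
  assumes g: "regime2 u n" and i: "i \<le> r - 1"
  shows "\<bar>real (trials u n) * (\<Prod>l<L + i. real (n - u n) - real l) * (\<Prod>l<r - 1 - i. real (u n) - real l)
          * (\<Prod>l<i. real (horizon u n) - real l) / ((\<Prod>l<k. real n - real l) * real n ^ i)
        - mu * tau ^ i * real (u n)\<bar> \<le> mu * tau ^ i * real (u n) * epsQ u n"
proof -
  note sz = regime2_sizes[OF g]
  note fb = falling_product_bounds[OF g i]
  note tb = trials_bounds[OF regime2_regime0[OF g]]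
  define U where "U = real (u n)"
  define nr where "nr = real n"
  define Mr where "Mr = trials_exact u n"
  define m where "m = real (trials u n)"
  define e1 where "e1 = 1 / (mu * nr)"
  define e2 where "e2 = real k * (U + real k) / nr"
  define e3 where "e3 = (real k)\<^sup>2 / U"
  define e4 where "e4 = real k * (real k + 1) / (tau * U)"
  define e5 where "e5 = (real k)\<^sup>2 / nr"
  have tU: "0 < tau * U" using tau_pos sz unfolding U_def by simp
  have es: "0 \<le> e1" "e1 \<le> 1/4" "0 \<le> e2" "e2 \<le> 1/4" "0 \<le> e3" "e3 \<le> 1/4" "0 \<le> e4" "e4 \<le> 1/4"
    "0 \<le> e5" "e5 \<le> 1/2"
    using regime2_errors[OF g] unfolding e1_def e2_def e3_def e4_def e5_def U_def nr_def by auto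
  have m: "Mr * (1 - e1) \<le> m" "m \<le> Mr"
    using trials_relative[OF g] tb(2) unfolding Mr_def m_def e1_def nr_def by auto
  define A1 where "A1 = (\<Prod>l<L + i. real (n - u n) - real l)"
  define A2 where "A2 = (\<Prod>l<r - 1 - i. real (u n) - real l)"
  define A4 where "A4 = (\<Prod>l<i. real (horizon u n) - real l)"
  have A: "nr ^ (L + i) * (1 - e2) \<le> A1" "A1 \<le> nr ^ (L + i)"
    "U ^ (r - 1 - i) * (1 - e3) \<le> A2" "A2 \<le> U ^ (r - 1 - i)"
    "(tau * U) ^ i * (1 - e4) \<le> A4" "A4 \<le> (tau * U) ^ i"
    using fb unfolding A1_def A2_def A4_def e2_def e3_def e4_def nr_def U_def by simp_all
  define Z where "Z = Mr * nr ^ (L + i) * U ^ (r - 1 - i) * (tau * U) ^ i"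
  define Num where "Num = m * A1 * A2 * A4"
  have Zpos: "0 < Z" unfolding Z_def using tb(1) sz tU unfolding Mr_def nr_def U_def by simp
  have "0 \<le> Mr" "0 \<le> nr ^ (L + i)" "0 \<le> U ^ (r - 1 - i)" "0 \<le> (tau * U) ^ i"
    using tb(1) sz tU unfolding Mr_def nr_def U_def by auto
  note N = prod4_relative_bounds[OF m(1) A(1) A(3) A(5) m(2) A(2) A(4) A(6) _ _ _ _ _ _ _ _ this, folded Z_def Num_def]
  have Nlo: "Z * (1 - (e1 + e2 + e3 + e4)) \<le> Num" and Nup: "Num \<le> Z" using N es by auto
  have Dlo: "nr ^ (k + i) * (1 - e5) \<le> (\<Prod>l<k. real n - real l) * nr ^ i"
    using fb(5) sz unfolding e5_def nr_def by (simp add: power_add mult_right_mono mult_ac)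
  have Dup: "(\<Prod>l<k. real n - real l) * nr ^ i \<le> nr ^ (k + i)"
    using fb(6) sz unfolding nr_def by (simp add: power_add mult_right_mono)
  have ZG: "Z / nr ^ (k + i) = mu * tau ^ i * U"
    using trials_exact_scaling[OF i, of u n] sz unfolding Z_def Mr_def nr_def U_def by simp
  have eps: "(e1 + e2 + e3 + e4) + 2 * e5 = epsQ u n"
    unfolding epsQ_def e1_def e2_def e3_def e4_def e5_def U_def nr_def by simp
  have "\<bar>Num / ((\<Prod>l<k. real n - real l) * nr ^ i) - Z / nr ^ (k + i)\<bar>
      \<le> Z / nr ^ (k + i) * ((e1 + e2 + e3 + e4) + 2 * e5)"
    using ratio_relative_error[OF Zpos _ Nlo Nup Dlo Dup] es sz unfolding nr_def by auto
  then have "\<bar>Num / ((\<Prod>l<k. real n - real l) * nr ^ i) - mu * tau ^ i * U\<bar> \<le> mu * tau ^ i * U * epsQ u n"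
    unfolding ZG eps .
  then show ?thesis unfolding Num_def m_def nr_def U_def A1_def A2_def A4_def .
qed

lemma initial_weight_close:
  assumes g: "regime2 u n" and i: "i \<le> r - 1"
  shows "\<bar>real (trials u n) * pj k u n (L + i) * pochhammer (real L + 1) i * real (horizon u n choose i) / real n ^ i
     - mu * tau ^ i * real (u n) * weight i\<bar> \<le> mu * tau ^ i * real (u n) * weight i * epsQ u n"
proof -
  have w: "0 \<le> weight i" unfolding weight_def by simp
  have kn: "k \<le> n" using regime2_sizes(7)[OF g] by simp
  define R where "R = real (trials u n) * (\<Prod>l<L + i. real (n - u n) - real l) * (\<Prod>l<r - 1 - i. real (u n) - real l)
          * (\<Prod>l<i. real (horizon u n) - real l) / ((\<Prod>l<k. real n - real l) * real n ^ i)"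
  define c where "c = mu * tau ^ i * real (u n)"
  have "\<bar>R * weight i - c * weight i\<bar> = \<bar>R - c\<bar> * weight i"
    using w by (simp add: left_diff_distrib[symmetric] abs_mult)
  also have "\<dots> \<le> c * epsQ u n * weight i"
    using mult_right_mono[OF falling_ratio_close[OF g i] w] unfolding R_def c_def .
  finally show ?thesis unfolding initial_weight_falling[OF i kn] R_def[symmetric] c_def by (simp add: mult_ac)
qed

end

context tilt_asymptotics begin

lemma initial_weight_upper:
  assumes g: "regime2 u n" and j: "j \<le> k"
  shows "real (trials u n) * pj k u n j * ratio u n ^ j \<le> mu * real k ^ k * real (u n) * ratio u n ^ L"
proof -
  note sz = regime2_sizes[OF g]
  note tb = trials_bounds[OF regime2_regime0[OF g]]
  define U where "U = real (u n)"
  define nr where "nr = real n"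
  have U1: "1 \<le> U" and n0: "0 < nr" and k1: "1 \<le> real k" and kn: "real k \<le> nr"
    using sz unfolding U_def nr_def by auto
  have c1: "real (n - u n choose j) \<le> nr ^ j"
  proof (cases "j \<le> n - u n")
    case True
    then have "real (n - u n choose j) \<le> real (n - u n) ^ j"
      using binomial_le_pow[OF True] by (metis of_nat_le_iff of_nat_power)
    also have "\<dots> \<le> nr ^ j" unfolding nr_def by (intro power_mono) auto
    finally show ?thesis .
  qed (use n0 in \<open>simp add: binomial_eq_0\<close>)
  have c2: "real (u n choose (k - j)) \<le> U ^ (k - j)"
  proof (cases "k - j \<le> u n")
    case True
    then show ?thesis using binomial_le_pow[OF True] unfolding U_def by (metis of_nat_le_iff of_nat_power)
  qed (use U1 in \<open>simp add: binomial_eq_0\<close>)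
  have c3: "(nr / real k) ^ k \<le> real (n choose k)"
    unfolding nr_def by (rule binomial_ge_n_over_k_pow_k) (use kn nr_def in simp)
  have c3p: "0 < (nr / real k) ^ k" using n0 k1 by simp
  have "pj k u n j \<le> nr ^ j * U ^ (k - j) / (nr / real k) ^ k"
    unfolding pj_def using c1 c2 c3 c3p by (intro frac_le mult_mono) auto
  then have "real (trials u n) * pj k u n j * (U / nr) ^ j
      \<le> trials_exact u n * (nr ^ j * U ^ (k - j) / (nr / real k) ^ k) * (U / nr) ^ j"
    using tb pj_nonneg n0 U1 by (intro mult_right_mono mult_mono) auto
  also have "\<dots> = mu * real k ^ k * U * (U / nr) ^ L"
  proof -
    define d where "d = r - 2"
    have q: "r - 1 = Suc d" "r - 2 = d" "k - j + j = k" "L + Suc d = k" using r2 j L_facts unfolding d_def by auto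
    have "trials_exact u n * (nr ^ j * U ^ (k - j) / (nr / real k) ^ k) * (U / nr) ^ j
        = mu * real k ^ k * (nr ^ Suc d * U ^ (k - j + j)) / (U ^ d * nr ^ k)"
      unfolding trials_exact_def q(1,2) U_def[symmetric] nr_def[symmetric] using n0 U1 k1
      by (simp add: field_simps power_divide power_add[symmetric])
    also have "\<dots> = mu * real k ^ k * (nr ^ Suc d * U ^ (L + Suc d)) / (U ^ d * nr ^ (L + Suc d))"
      unfolding q(3,4) ..
    also have "\<dots> = mu * real k ^ k * U * (U / nr) ^ L"
      using n0 U1 by (simp add: power_add field_simps power_divide)
    finally show ?thesis .
  qed
  finally show ?thesis unfolding ratio_def U_def nr_def .
qed

definition Ceps :: real where "Ceps = 1 / mu + real k + 4 * (real k)\<^sup>2 + real k * (real k + 1) / tau"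

lemma u_epsQ_bound:
  assumes g: "regime2 u n"
  shows "real (u n) * epsQ u n \<le> Ceps * (real (u n) * ratio u n + 1)"
proof -
  note sz = regime2_sizes[OF g]
  define U where "U = real (u n)"
  define nr where "nr = real n"
  define x where "x = ratio u n"
  have U1: "1 \<le> U" and n0: "0 < nr" using sz unfolding U_def nr_def by auto
  have x0: "0 < x" using regime0_ratio(1)[OF regime2_regime0[OF g]] unfolding x_def .
  have xe: "x = U / nr" unfolding x_def ratio_def U_def nr_def ..
  have xU: "x \<le> U * x" using U1 x0 by simp
  have "U * epsQ u n = x / mu + real k * (U * x) + (real k)\<^sup>2 * x + (real k)\<^sup>2 + real k * (real k + 1) / tau
      + 2 * (real k)\<^sup>2 * x"
    unfolding epsQ_def U_def[symmetric] nr_def[symmetric] xe using U1 n0 mu_pos tau_pos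
    by (simp add: field_simps power2_eq_square)
  also have "\<dots> \<le> (U * x) / mu + real k * (U * x) + (real k)\<^sup>2 * (U * x) + (real k)\<^sup>2
      + real k * (real k + 1) / tau + 2 * (real k)\<^sup>2 * (U * x)"
    using xU mu_pos by (intro add_mono mult_left_mono divide_right_mono order_refl) auto
  also have "\<dots> \<le> Ceps * (U * x + 1)"
  proof -
    have "0 \<le> (real k)\<^sup>2 * (U * x) + real k * (real k + 1) / tau * (U * x) + 1 / mu + real k + 3 * (real k)\<^sup>2"
      using tau_pos mu_pos U1 x0 by (intro add_nonneg_nonneg mult_nonneg_nonneg) auto
    then show ?thesis unfolding Ceps_def by (simp add: algebra_simps add_divide_distrib)
  qed
  finally show ?thesis unfolding U_def x_def .
qed

definition theta :: "(nat \<Rightarrow> nat) \<Rightarrow> nat \<Rightarrow> nat \<Rightarrow> real" where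
  "theta u n j = (if 1 \<le> j \<and> j \<le> k - r + 1 then bcoef u n (horizon u n) * real j
     else if k - r + 2 \<le> j \<and> j \<le> k then acoef u n (horizon u n) j else 0)"

definition Eb :: real where "Eb = exp (real k * (\<bar>lam\<bar> + 1)) + 1"

lemma low_level_term:
  assumes g: "regime2 u n" and j: "j < L"
  shows "\<bar>real (trials u n) * pj k u n j * (exp (theta u n j) - 1)\<bar> \<le> mu * real k ^ k * Eb * (real (u n) * ratio u n)"
proof -
  define x where "x = ratio u n"
  define mp where "mp = real (trials u n) * pj k u n j"
  have g0: "regime0 u n" using regime2_regime0[OF g] .
  have x0: "0 < x" "x \<le> 1" using regime0_ratio[OF g0] unfolding x_def by auto
  have jk: "j \<le> k" using j L_facts by simp
  have mp0: "0 \<le> mp" unfolding mp_def using pj_nonneg by simp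
  have mp: "mp \<le> mu * real k ^ k * real (u n) * x"
  proof -
    have "L = (L - j - 1) + 1 + j" using j by simp
    then have "x ^ L = x ^ (L - j - 1) * x * x ^ j" by (metis power_add power_one_right)
    moreover have "x ^ (L - j - 1) \<le> 1" using x0 by (simp add: power_le_one)
    ultimately have "mu * real k ^ k * real (u n) * x ^ L \<le> mu * real k ^ k * real (u n) * (1 * x * x ^ j)"
      using x0 mu_pos by (intro mult_left_mono mult_right_mono) auto
    then have "mu * real k ^ k * real (u n) * x ^ L \<le> (mu * real k ^ k * real (u n) * x) * x ^ j"
      by (simp add: mult_ac)
    then have "mp * x ^ j \<le> (mu * real k ^ k * real (u n) * x) * x ^ j"
      using initial_weight_upper[OF g jk] unfolding mp_def x_def by linarith
    then show ?thesis using x0 by simp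
  qed
  have th: "\<bar>exp (theta u n j) - 1\<bar> \<le> Eb"
  proof -
    have "\<bar>bcoef u n (horizon u n)\<bar> \<le> \<bar>lam\<bar> + 1" using bcoef_near_lam[OF g0 order_refl] by linarith
    then have "\<bar>bcoef u n (horizon u n) * real j\<bar> \<le> (\<bar>lam\<bar> + 1) * real k"
      unfolding abs_mult using jk by (intro mult_mono) auto
    then have "theta u n j \<le> real k * (\<bar>lam\<bar> + 1)"
      unfolding theta_def L_facts(4) using j by (auto simp: mult.commute)
    then have "exp (theta u n j) \<le> exp (real k * (\<bar>lam\<bar> + 1))" by simp
    then show ?thesis unfolding Eb_def using exp_gt_zero[of "theta u n j"] by linarith
  qed
  have "\<bar>mp * (exp (theta u n j) - 1)\<bar> = mp * \<bar>exp (theta u n j) - 1\<bar>" using mp0 by (simp add: abs_mult)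
  also have "\<dots> \<le> (mu * real k ^ k * real (u n) * x) * Eb"
    by (rule mult_mono[OF mp th]) (use mu_pos x0 in auto)
  finally show ?thesis unfolding mp_def x_def by (simp add: mult_ac)
qed

end

context tilt_asymptotics begin

lemma initial_weight_level_upper:
  assumes g: "regime2 u n" and i: "i \<le> r - 1"
  shows "real (trials u n) * pj k u n (L + i) * ratio u n ^ i \<le> mu * real k ^ k * real (u n)"
proof -
  have x0: "0 < ratio u n" using regime0_ratio(1)[OF regime2_regime0[OF g]] .
  have "(real (trials u n) * pj k u n (L + i) * ratio u n ^ i) * ratio u n ^ L \<le> (mu * real k ^ k * real (u n)) * ratio u n ^ L"
    using initial_weight_upper[OF g, of "L + i"] i L_facts by (simp add: power_add mult_ac)
  then show ?thesis using x0 by simp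
qed

lemma theta_base_close:
  assumes g: "regime1 u n"
  shows "\<bar>exp (theta u n L) - exp (real L * lam)\<bar> \<le> 2 * exp (real L * \<bar>lam\<bar>) * (real L * Cb * tau * ratio u n)"
proof -
  note gf = regime1_facts[OF g]
  define x where "x = ratio u n"
  define b where "b = bcoef u n (horizon u n)"
  have x0: "0 < x" using regime0_ratio[OF gf(1)] unfolding x_def by auto
  have th: "theta u n L = real L * b" unfolding theta_def b_def using L_facts by (simp add: L_def)
  have "\<bar>real L * b - real L * lam\<bar> = real L * \<bar>b - lam\<bar>" by (simp add: abs_mult right_diff_distrib[symmetric])
  also have "\<dots> \<le> real L * (Cb * tau * x)"
    using bcoef_final_close[OF gf(1)] unfolding b_def x_def by (intro mult_left_mono) auto
  finally have d: "\<bar>real L * b - real L * lam\<bar> \<le> real L * Cb * tau * x" by (simp add: mult_ac)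
  have "real L * Cb * tau * x \<le> (real L * Cb * tau + Ka) * x" using Ka_ge1 x0 by (simp add: algebra_simps)
  then have d1: "\<bar>real L * b - real L * lam\<bar> \<le> 1" using d gf(4) unfolding x_def by linarith
  have "exp (real L * lam) \<le> exp (real L * \<bar>lam\<bar>)" by (simp add: mult_left_mono)
  then show ?thesis unfolding th x_def[symmetric]
    using exp_lipschitz[OF d1] d by (smt (verit) mult_mono exp_gt_zero abs_ge_zero)
qed

lemma theta_upper_close:
  assumes g: "regime1 u n" and i: "1 \<le> i" "i \<le> r - 1"
  shows "\<bar>theta u n (L + i) - apoly n i (horizon u n)\<bar> \<le> Mlev (i - 1) * tau * ratio u n * ratio u n ^ i"
    "\<bar>exp (theta u n (L + i)) - 1 - theta u n (L + i)\<bar> \<le> Ka\<^sup>2 * (ratio u n ^ i)\<^sup>2"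
proof -
  note gf = regime1_facts[OF g]
  define x where "x = ratio u n"
  define T where "T = horizon u n"
  define a where "a = theta u n (L + i)"
  have x0: "0 < x" "x \<le> 1" using regime0_ratio[OF gf(1)] unfolding x_def by auto
  have ik: "i - 1 < k" using i rk by linarith
  have xi: "x ^ i \<le> x" using x0 i by (simp add: power_decreasing[of 1 i x, simplified])
  have a: "a = acoef u n T (L + i)" unfolding a_def theta_def T_def using i L_facts by (auto simp: L_def)
  show aA: "\<bar>theta u n (L + i) - apoly n i (horizon u n)\<bar> \<le> Mlev (i - 1) * tau * ratio u n * ratio u n ^ i"
    using acoef_levels[OF g i, of T] level_error_scale(1)[OF g ik, of T i] a
    unfolding a_def T_def by (simp add: mult_ac)
  have "\<bar>a\<bar> \<le> Ka * x ^ i"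
    using aA apoly_bound[OF gf(1) _ i(2), of T] level_error_scale(2)[OF g ik, of T i]
    unfolding a_def T_def x_def by (simp add: algebra_simps mult_ac)
  moreover have "Ka * x ^ i \<le> Ka * x" using xi Ka_ge1 by (intro mult_left_mono) auto
  ultimately have "\<bar>a\<bar> \<le> 1" "\<bar>a\<bar> \<le> Ka * x ^ i" using gf(3) unfolding x_def by linarith+
  then show "\<bar>exp (theta u n (L + i)) - 1 - theta u n (L + i)\<bar> \<le> Ka\<^sup>2 * (ratio u n ^ i)\<^sup>2"
    using exp_taylor_abs[of a] power_mono[of "\<bar>a\<bar>" "Ka * x ^ i" 2]
    unfolding a_def x_def by (simp add: power_mult_distrib)
qed

definition C_base :: real where
  "C_base = mu * real k ^ k * (2 * exp (real L * \<bar>lam\<bar>) * real L * Cb * tau) + \<bar>cL\<bar> * mu * weight 0 * Ceps"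

lemma base_level_term:
  assumes g: "regime2 u n"
  shows "\<bar>real (trials u n) * pj k u n L * (exp (theta u n L) - 1) - cL * (mu * real (u n) * weight 0)\<bar>
    \<le> C_base * (real (u n) * ratio u n + 1)"
proof -
  define x where "x = ratio u n"
  define U where "U = real (u n)"
  define mp where "mp = real (trials u n) * pj k u n L"
  define ed where "ed = exp (theta u n L) - exp (real L * lam)"
  have U1: "1 \<le> U" using regime2_sizes[OF g] unfolding U_def by simp
  have mp0: "0 \<le> mp" unfolding mp_def using pj_nonneg by simp
  have mpb: "mp \<le> mu * real k ^ k * U" using initial_weight_level_upper[OF g, of 0] unfolding mp_def U_def by simp
  have edb: "\<bar>ed\<bar> \<le> 2 * exp (real L * \<bar>lam\<bar>) * (real L * Cb * tau * x)"
    using theta_base_close[OF regime2_regime1[OF g]] unfolding ed_def x_def .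
  have "\<bar>mp - mu * U * weight 0\<bar> \<le> mu * weight 0 * (U * epsQ u n)"
    using initial_weight_close[OF g, of 0] unfolding mp_def U_def by (simp add: mult_ac)
  also have "\<dots> \<le> mu * weight 0 * (Ceps * (U * x + 1))"
    using u_epsQ_bound[OF g] mu_pos unfolding U_def x_def weight_def by (intro mult_left_mono) auto
  finally have Q0: "\<bar>mp - mu * U * weight 0\<bar> \<le> mu * weight 0 * (Ceps * (U * x + 1))" .
  have "\<bar>mp * (exp (theta u n L) - 1) - cL * (mu * U * weight 0)\<bar> = \<bar>mp * ed + cL * (mp - mu * U * weight 0)\<bar>"
    unfolding ed_def cL_def by (simp add: algebra_simps)
  also have "\<dots> \<le> \<bar>mp * ed\<bar> + \<bar>cL * (mp - mu * U * weight 0)\<bar>" by (rule abs_triangle_ineq)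
  also have "\<dots> = mp * \<bar>ed\<bar> + \<bar>cL\<bar> * \<bar>mp - mu * U * weight 0\<bar>" using mp0 by (simp add: abs_mult)
  also have "\<dots> \<le> (mu * real k ^ k * U) * (2 * exp (real L * \<bar>lam\<bar>) * (real L * Cb * tau * x))
      + \<bar>cL\<bar> * (mu * weight 0 * (Ceps * (U * x + 1)))"
    by (rule add_mono[OF mult_mono[OF mpb edb] mult_left_mono[OF Q0 abs_ge_zero]]) (use mu_pos U1 in auto)
  also have "\<dots> \<le> C_base * (U * x + 1)"
  proof -
    have "0 \<le> mu * real k ^ k * (2 * exp (real L * \<bar>lam\<bar>) * real L * Cb * tau)" using mu_pos tau_pos Cb_pos by simp
    then have "(mu * real k ^ k * U) * (2 * exp (real L * \<bar>lam\<bar>) * (real L * Cb * tau * x))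
       \<le> (mu * real k ^ k * (2 * exp (real L * \<bar>lam\<bar>) * real L * Cb * tau)) * (U * x + 1)"
      by (simp add: algebra_simps)
    then show ?thesis unfolding C_base_def by (simp add: algebra_simps)
  qed
  finally show ?thesis unfolding mp_def U_def x_def .
qed

definition C_upper :: "nat \<Rightarrow> real" where
  "C_upper i = mu * real k ^ k * (Ka\<^sup>2 + Mlev (i - 1) * tau) + \<bar>cL\<bar> * mu * tau ^ i * weight i * Ceps"

lemma upper_level_term:
  assumes g: "regime2 u n" and i: "1 \<le> i" "i \<le> r - 1"
  shows "\<bar>real (trials u n) * pj k u n (L + i) * (exp (theta u n (L + i)) - 1) - cL * (mu * tau ^ i * real (u n) * weight i)\<bar>
    \<le> C_upper i * (real (u n) * ratio u n + 1)"
proof -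
  define x where "x = ratio u n"
  define U where "U = real (u n)"
  define T where "T = horizon u n"
  define mp where "mp = real (trials u n) * pj k u n (L + i)"
  define a where "a = theta u n (L + i)"
  define A where "A = apoly n i T"
  define Q where "Q = mp * pochhammer (real L + 1) i * real (T choose i) / real n ^ i"
  note th = theta_upper_close[OF regime2_regime1[OF g] i, folded a_def T_def A_def x_def]
  have x0: "0 < x" "x \<le> 1" using regime0_ratio[OF regime2_regime0[OF g]] unfolding x_def by auto
  have U1: "1 \<le> U" using regime2_sizes[OF g] unfolding U_def by simp
  have mp0: "0 \<le> mp" unfolding mp_def using pj_nonneg by simp
  have xi: "0 < x ^ i" "x ^ i \<le> x" using x0 i by (auto simp: power_decreasing[of 1 i x, simplified])
  have mpb: "mp * x ^ i \<le> mu * real k ^ k * U"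
    using initial_weight_level_upper[OF g i(2)] unfolding mp_def x_def U_def .
  have "\<bar>Q - mu * tau ^ i * U * weight i\<bar> \<le> mu * tau ^ i * weight i * (U * epsQ u n)"
    using initial_weight_close[OF g i(2)] unfolding Q_def mp_def T_def U_def by (simp add: mult_ac)
  also have "\<dots> \<le> mu * tau ^ i * weight i * (Ceps * (U * x + 1))"
    using u_epsQ_bound[OF g] mu_pos tau_pos unfolding U_def x_def weight_def by (intro mult_left_mono) auto
  finally have Qi: "\<bar>Q - mu * tau ^ i * U * weight i\<bar> \<le> mu * tau ^ i * weight i * (Ceps * (U * x + 1))" .
  have split: "mp * (exp a - 1) - cL * (mu * tau ^ i * U * weight i)
      = mp * (exp a - 1 - a) + mp * (a - A) + cL * (Q - mu * tau ^ i * U * weight i)"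
    unfolding A_def Q_def apoly_def by (simp add: algebra_simps)
  have "\<bar>mp * (exp a - 1) - cL * (mu * tau ^ i * U * weight i)\<bar>
      \<le> \<bar>mp * (exp a - 1 - a)\<bar> + \<bar>mp * (a - A)\<bar> + \<bar>cL * (Q - mu * tau ^ i * U * weight i)\<bar>"
    unfolding split by (rule order_trans[OF abs_triangle_ineq add_right_mono[OF abs_triangle_ineq]])
  also have "\<dots> = mp * \<bar>exp a - 1 - a\<bar> + mp * \<bar>a - A\<bar> + \<bar>cL\<bar> * \<bar>Q - mu * tau ^ i * U * weight i\<bar>"
    using mp0 by (simp add: abs_mult)
  also have "\<dots> \<le> (mp * x ^ i) * (Ka\<^sup>2 * x ^ i) + (mp * x ^ i) * (Mlev (i - 1) * tau * x)
      + \<bar>cL\<bar> * (mu * tau ^ i * weight i * (Ceps * (U * x + 1)))"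
  proof -
    have "mp * \<bar>exp a - 1 - a\<bar> \<le> (mp * x ^ i) * (Ka\<^sup>2 * x ^ i)"
      using mult_left_mono[OF th(2) mp0] by (simp add: power2_eq_square mult_ac)
    moreover have "mp * \<bar>a - A\<bar> \<le> (mp * x ^ i) * (Mlev (i - 1) * tau * x)"
      using mult_left_mono[OF th(1) mp0] by (simp add: A_def mult_ac)
    ultimately show ?thesis using mult_left_mono[OF Qi abs_ge_zero[of cL]] by linarith
  qed
  also have "\<dots> \<le> (mu * real k ^ k * U) * (Ka\<^sup>2 * x) + (mu * real k ^ k * U) * (Mlev (i - 1) * tau * x)
      + \<bar>cL\<bar> * (mu * tau ^ i * weight i * (Ceps * (U * x + 1)))"
  proof -
    have "Ka\<^sup>2 * x ^ i \<le> Ka\<^sup>2 * x" using xi by (intro mult_left_mono) auto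
    moreover have "0 \<le> mu * real k ^ k * U" "0 \<le> Mlev (i - 1) * tau * x"
      using mu_pos U1 Mlev_nonneg tau_pos x0 by auto
    ultimately have "(mp * x ^ i) * (Ka\<^sup>2 * x ^ i) \<le> (mu * real k ^ k * U) * (Ka\<^sup>2 * x)"
      "(mp * x ^ i) * (Mlev (i - 1) * tau * x) \<le> (mu * real k ^ k * U) * (Mlev (i - 1) * tau * x)"
      using mpb xi mp0 by (auto intro!: mult_mono mult_right_mono)
    then show ?thesis by linarith
  qed
  also have "\<dots> \<le> C_upper i * (U * x + 1)"
  proof -
    have "0 \<le> mu * real k ^ k * (Ka\<^sup>2 + Mlev (i - 1) * tau)" using mu_pos tau_pos Mlev_nonneg by simp
    then show ?thesis unfolding C_upper_def by (simp add: algebra_simps)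
  qed
  finally show ?thesis unfolding mp_def a_def U_def x_def .
qed

end

context tilt_asymptotics begin

definition Ysum :: "(nat \<Rightarrow> nat) \<Rightarrow> nat \<Rightarrow> real" where
  "Ysum u n = (\<Sum>j\<le>k. pj k u n j * exp (theta u n j))"

definition Csum :: real where
  "Csum = real L * (mu * real k ^ k * Eb) + C_base + (\<Sum>i=1..r-1. C_upper i)"

lemma Csum_nonneg: "0 \<le> Csum"
proof -
  have "0 \<le> Ceps" unfolding Ceps_def using mu_pos tau_pos by simp
  moreover have "0 \<le> weight i" for i unfolding weight_def by simp
  ultimately have "0 \<le> C_base" "\<And>i. 0 \<le> C_upper i"
    unfolding C_base_def C_upper_def using mu_pos tau_pos Cb_pos Mlev_nonneg by auto
  moreover have "0 \<le> Eb" unfolding Eb_def by (simp add: add_nonneg_nonneg)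
  ultimately show ?thesis unfolding Csum_def using mu_pos by (simp add: sum_nonneg)
qed

definition level_term :: "(nat \<Rightarrow> nat) \<Rightarrow> nat \<Rightarrow> nat \<Rightarrow> real" where
  "level_term u n j = real (trials u n) * pj k u n j * (exp (theta u n j) - 1)"

lemma trials_Ysum_split:
  assumes g: "regime0 u n"
  shows "real (trials u n) * (Ysum u n - 1)
    = (\<Sum>j<L. level_term u n j) + level_term u n L + (\<Sum>i=1..r-1. level_term u n (L + i))"
proof -
  have "(\<Sum>j\<le>k. pj k u n j) = 1" using pj_sum regime0_sizes(3,4)[OF g, of 0] by simp
  then have "Ysum u n - 1 = (\<Sum>j\<le>k. pj k u n j * (exp (theta u n j) - 1))"
    unfolding Ysum_def by (simp add: algebra_simps sum_subtractf)
  then have "real (trials u n) * (Ysum u n - 1) = (\<Sum>j\<le>k. level_term u n j)"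
    unfolding level_term_def by (simp add: sum_distrib_left mult_ac)
  also have "\<dots> = (\<Sum>j<L. level_term u n j) + (\<Sum>j=L..k. level_term u n j)"
    using L_facts by (subst sum.union_disjoint[symmetric]) (auto intro!: sum.cong)
  also have "(\<Sum>j=L..k. level_term u n j) = (\<Sum>i=0..r-1. level_term u n (L + i))"
    using sum.shift_bounds_cl_nat_ivl[of "level_term u n" 0 L "r - 1"] L_facts by (simp add: add.commute)
  also have "\<dots> = level_term u n L + (\<Sum>i=1..r-1. level_term u n (L + i))"
    by (subst sum.atLeast_Suc_atMost) auto
  finally show ?thesis by simp
qed

(* The weights sum to the coefficient of the main term (binomial theorem). *)
lemma weight_sum: "(\<Sum>i\<le>r-1. tau ^ i * weight i) = real (k choose (r - 1)) * (1 + tau) ^ (r - 1)"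
  using binomial_ring[of tau 1 "r - 1"] unfolding weight_def
  by (simp add: sum_distrib_left add.commute mult_ac)

(* Main term: m (Y - 1) = mu cL binom(k, r-1) (1+tau)^(r-1) u + O(u x + 1); levels below L
   are negligible and level L+i contributes cL mu tau^i u weight i. *)
lemma tilted_sum_close:
  assumes g: "regime2 u n"
  shows "\<bar>real (trials u n) * (Ysum u n - 1) - mu * cL * real (k choose (r - 1)) * (1 + tau) ^ (r - 1) * real (u n)\<bar>
     \<le> Csum * (real (u n) * ratio u n + 1)"
proof -
  define x where "x = ratio u n"
  define U where "U = real (u n)"
  define f where "f = level_term u n"
  define tg where "tg = (\<lambda>i. cL * (mu * tau ^ i * U * weight i))"
  have main: "mu * cL * real (k choose (r - 1)) * (1 + tau) ^ (r - 1) * U = tg 0 + (\<Sum>i=1..r-1. tg i)"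
  proof -
    have "(\<Sum>i\<le>r-1. tg i) = mu * cL * (\<Sum>i\<le>r-1. tau ^ i * weight i) * U"
      unfolding tg_def by (simp add: sum_distrib_left sum_distrib_right mult_ac)
    then have "mu * cL * real (k choose (r - 1)) * (1 + tau) ^ (r - 1) * U = (\<Sum>i\<le>r-1. tg i)"
      unfolding weight_sum by (simp add: mult_ac)
    also have "\<dots> = tg 0 + (\<Sum>i=1..r-1. tg i)" by (simp add: atMost_atLeast0 sum.atLeast_Suc_atMost)
    finally show ?thesis .
  qed
  have "\<bar>(\<Sum>j<L. f j) + f L + (\<Sum>i=1..r-1. f (L + i)) - (tg 0 + (\<Sum>i=1..r-1. tg i))\<bar>
      \<le> (\<Sum>j<L. \<bar>f j\<bar>) + \<bar>f L - tg 0\<bar> + (\<Sum>i=1..r-1. \<bar>f (L + i) - tg i\<bar>)"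
  proof -
    have "\<bar>\<Sum>j<L. f j\<bar> \<le> (\<Sum>j<L. \<bar>f j\<bar>)" "\<bar>\<Sum>i=1..r-1. f (L + i) - tg i\<bar> \<le> (\<Sum>i=1..r-1. \<bar>f (L + i) - tg i\<bar>)"
      by (rule sum_abs)+
    moreover have "(\<Sum>i=1..r-1. f (L + i) - tg i) = (\<Sum>i=1..r-1. f (L + i)) - (\<Sum>i=1..r-1. tg i)"
      by (rule sum_subtractf)
    ultimately show ?thesis by linarith
  qed
  also have "\<dots> \<le> (\<Sum>j<L. mu * real k ^ k * Eb * (U * x)) + C_base * (U * x + 1) + (\<Sum>i=1..r-1. C_upper i * (U * x + 1))"
  proof (intro add_mono sum_mono)
    show "\<bar>f j\<bar> \<le> mu * real k ^ k * Eb * (U * x)" if "j \<in> {..<L}" for j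
      using low_level_term[OF g, of j] that unfolding f_def level_term_def U_def x_def by simp
    show "\<bar>f L - tg 0\<bar> \<le> C_base * (U * x + 1)"
      using base_level_term[OF g] unfolding f_def level_term_def tg_def U_def x_def by simp
    show "\<bar>f (L + i) - tg i\<bar> \<le> C_upper i * (U * x + 1)" if "i \<in> {1..r-1}" for i
      using upper_level_term[OF g, of i] that unfolding f_def level_term_def tg_def U_def x_def by simp
  qed
  also have "\<dots> \<le> Csum * (U * x + 1)"
  proof -
    have "real L * (mu * real k ^ k * Eb) * (U * x) \<le> real L * (mu * real k ^ k * Eb) * (U * x + 1)"
      using mu_pos unfolding Eb_def by (intro mult_left_mono) (auto simp: add_pos_pos)
    then show ?thesis unfolding Csum_def by (simp add: sum_distrib_right distrib_right)
  qed
  finally show ?thesis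
    unfolding trials_Ysum_split[OF regime2_regime0[OF g]] main[symmetric] f_def U_def x_def .
qed

(* The last size condition: it makes |Y - 1| \<le> 1/2. *)
definition Bc :: real where "Bc = \<bar>mu * cL * real (k choose (r - 1)) * (1 + tau) ^ (r - 1)\<bar> + 2 * Csum"
definition regime3 :: "(nat \<Rightarrow> nat) \<Rightarrow> nat \<Rightarrow> bool" where
  "regime3 u n \<longleftrightarrow> regime2 u n \<and> 4 * Bc * real (u n) \<le> mu * real n"

(* m \<ge> mu n / 2 and |m (Y - 1)| = O(u): together Y - 1 = O(x). *)
lemma trials_lower: "regime2 u n \<Longrightarrow> mu * real n / 2 \<le> real (trials u n)"
  using trials_bounds(3,4)[OF regime2_regime0] unfolding regime2_def by fastforce

lemma tilted_sum_bound:
  assumes g: "regime2 u n"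
  shows "\<bar>real (trials u n) * (Ysum u n - 1)\<bar> \<le> Bc * real (u n)"
proof -
  define U where "U = real (u n)"
  define x where "x = ratio u n"
  define c where "c = mu * cL * real (k choose (r - 1)) * (1 + tau) ^ (r - 1)"
  have U1: "1 \<le> U" using regime2_sizes[OF g] unfolding U_def by simp
  have "x \<le> 1" using regime0_ratio(2)[OF regime2_regime0[OF g]] unfolding x_def .
  then have "U * x \<le> U" using U1 by (simp add: mult_left_le)
  then have "U * x + 1 \<le> 2 * U" using U1 by linarith
  then have "Csum * (U * x + 1) \<le> Csum * (2 * U)" using Csum_nonneg by (rule mult_left_mono)
  moreover have "\<bar>c * U\<bar> = \<bar>c\<bar> * U" using U1 by (simp add: abs_mult)
  moreover have "\<bar>real (trials u n) * (Ysum u n - 1) - c * U\<bar> \<le> Csum * (U * x + 1)"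
    using tilted_sum_close[OF g] unfolding c_def U_def x_def .
  moreover have "Bc * U = \<bar>c\<bar> * U + Csum * (2 * U)" unfolding Bc_def c_def by (simp add: algebra_simps)
  ultimately show ?thesis unfolding U_def by linarith
qed

(* m ln Y = m (Y - 1) + O(u x): Y - 1 = O(x) while m is of order n. *)
lemma log_Ysum_close:
  assumes g3: "regime3 u n"
  shows "0 < Ysum u n"
    "\<bar>real (trials u n) * ln (Ysum u n) - real (trials u n) * (Ysum u n - 1)\<bar> \<le> 4 * Bc\<^sup>2 / mu * (real (u n) * ratio u n)"
proof -
  have g: "regime2 u n" using g3 unfolding regime3_def by simp
  define x where "x = ratio u n"
  define U where "U = real (u n)"
  define m where "m = real (trials u n)"
  define Y where "Y = Ysum u n"
  have xe: "x = U / real n" unfolding x_def ratio_def U_def ..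
  have n0: "0 < real n" using regime2_sizes[OF g] by simp
  have mY: "\<bar>m * (Y - 1)\<bar> \<le> Bc * U" using tilted_sum_bound[OF g] unfolding m_def Y_def U_def .
  have ml: "mu * real n / 2 \<le> m" using trials_lower[OF g] unfolding m_def .
  have mpos: "0 < m" using ml mu_pos n0 by (smt (verit) divide_pos_pos mult_pos_pos)
  have "\<bar>Y - 1\<bar> = \<bar>m * (Y - 1)\<bar> / m" using mpos by (simp add: abs_mult)
  also have "\<dots> \<le> Bc * U / (mu * real n / 2)"
    using mY ml mpos mu_pos n0 abs_ge_zero[of "m * (Y - 1)"] by (intro frac_le) auto
  also have "\<dots> = 2 * Bc * x / mu" unfolding xe using mu_pos n0 by (simp add: field_simps)
  finally have Y1: "\<bar>Y - 1\<bar> \<le> 2 * Bc * x / mu" .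
  have "4 * Bc * U \<le> mu * real n" using g3 unfolding regime3_def U_def by simp
  then have "2 * Bc * x / mu \<le> 1/2" unfolding xe using mu_pos n0 by (simp add: divide_simps mult_ac)
  then have Y12: "\<bar>Y - 1\<bar> \<le> 1/2" using Y1 by linarith
  then show "0 < Ysum u n" unfolding Y_def by linarith
  have "\<bar>m * ln Y - m * (Y - 1)\<bar> = m * \<bar>ln (1 + (Y - 1)) - (Y - 1)\<bar>"
    using mpos by (simp add: abs_mult right_diff_distrib[symmetric])
  also have "\<dots> \<le> m * (2 * (Y - 1)\<^sup>2)"
    using abs_ln_one_plus_x_minus_x_bound[OF Y12] mpos by (intro mult_left_mono) auto
  also have "\<dots> = 2 * \<bar>m * (Y - 1)\<bar> * \<bar>Y - 1\<bar>" using mpos by (simp add: abs_mult power2_eq_square)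
  also have "\<dots> \<le> 2 * (Bc * U) * (2 * Bc * x / mu)" using mY Y1 by (intro mult_mono) auto
  also have "\<dots> = 4 * Bc\<^sup>2 / mu * (U * x)" by (simp add: power2_eq_square)
  finally show "\<bar>real (trials u n) * ln (Ysum u n) - real (trials u n) * (Ysum u n - 1)\<bar> \<le> 4 * Bc\<^sup>2 / mu * (real (u n) * ratio u n)"
    unfolding m_def Y_def U_def x_def .
qed

definition Cfin :: real where "Cfin = \<bar>lam\<bar> + 2 * Cb * tau\<^sup>2 + 4 * Bc\<^sup>2 / mu + Csum"

lemma log_mgf_close:
  assumes g3: "regime3 u n"
  shows "0 < measure_pmf.expectation (chain k r u n (trials u n) (horizon u n)) (\<lambda>s. exp (lam * real_of_int (fst s)))"
    "\<bar>ln (measure_pmf.expectation (chain k r u n (trials u n) (horizon u n)) (\<lambda>s. exp (lam * real_of_int (fst s))))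
       - phi k r mu lam tau * real (u n)\<bar> \<le> Cfin * (real (u n) * ratio u n + 1)"
proof -
  have g: "regime2 u n" using g3 unfolding regime3_def by simp
  note sz = regime2_sizes[OF g]
  define x where "x = ratio u n"
  define U where "U = real (u n)"
  define m where "m = real (trials u n)"
  define Y where "Y = Ysum u n"
  define P where "P = (\<Prod>i<horizon u n. step_factor k r u n (horizon u n - Suc i) (bcoef u n i))"
  define E where "E = measure_pmf.expectation (chain k r u n (trials u n) (horizon u n)) (\<lambda>s. exp (lam * real_of_int (fst s)))"
  have Ux: "0 \<le> U * x" using regime0_ratio(1)[OF regime2_regime0[OF g]] unfolding U_def x_def by simp
  have "(\<Sum>j\<le>k. pj k u n j) = 1" using pj_sum sz(3,7) by simp
  then have EF: "E = P * Y ^ trials u n"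
    unfolding E_def P_def Y_def Ysum_def theta_def bcoef_def acoef_def
    using exact_mgf_formula[OF r2 rk pj_nonneg, of u n "trials u n" "horizon u n" lam] by simp
  have Pp: "0 < P" unfolding P_def step_factor_def by (simp add: prod_pos)
  have Yp: "0 < Y" using log_Ysum_close(1)[OF g3] unfolding Y_def .
  show "0 < measure_pmf.expectation (chain k r u n (trials u n) (horizon u n)) (\<lambda>s. exp (lam * real_of_int (fst s)))"
    using EF Pp Yp unfolding E_def by simp
  have lnE: "ln E = ln P + m * ln Y" unfolding EF m_def using Pp Yp by (simp add: ln_mult ln_realpow)
  have lP: "\<bar>ln P + lam * tau * U\<bar> \<le> \<bar>lam\<bar> + 2 * Cb * tau\<^sup>2 * (U * x)"
    using log_prod_step_factors[OF regime2_regime0[OF g]] unfolding P_def U_def x_def ratio_def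
    by (simp add: power2_eq_square)
  have phiU: "phi k r mu lam tau * real (u n)
      = mu * cL * real (k choose (r - 1)) * (1 + tau) ^ (r - 1) * real (u n) - lam * tau * real (u n)"
    unfolding phi_def cL_def L_def by (simp add: algebra_simps)
  have "\<bar>ln E - phi k r mu lam tau * U\<bar> \<le> (\<bar>lam\<bar> + 2 * Cb * tau\<^sup>2 * (U * x)) + 4 * Bc\<^sup>2 / mu * (U * x) + Csum * (U * x + 1)"
    using lP log_Ysum_close(2)[OF g3] tilted_sum_close[OF g]
    unfolding lnE U_def x_def phiU m_def Y_def by linarith
  also have "\<dots> \<le> Cfin * (U * x + 1)"
  proof -
    have "\<bar>lam\<bar> * 1 \<le> \<bar>lam\<bar> * (U * x + 1)" "2 * Cb * tau\<^sup>2 * (U * x) \<le> 2 * Cb * tau\<^sup>2 * (U * x + 1)"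
      "4 * Bc\<^sup>2 / mu * (U * x) \<le> 4 * Bc\<^sup>2 / mu * (U * x + 1)"
      using Ux Cb_pos mu_pos by (intro mult_left_mono; simp)+
    moreover have "Cfin * (U * x + 1) = \<bar>lam\<bar> * (U * x + 1) + 2 * Cb * tau\<^sup>2 * (U * x + 1)
        + 4 * Bc\<^sup>2 / mu * (U * x + 1) + Csum * (U * x + 1)"
      unfolding Cfin_def by (simp add: algebra_simps)
    ultimately show ?thesis by linarith
  qed
  finally show "\<bar>ln (measure_pmf.expectation (chain k r u n (trials u n) (horizon u n)) (\<lambda>s. exp (lam * real_of_int (fst s))))
       - phi k r mu lam tau * real (u n)\<bar> \<le> Cfin * (real (u n) * ratio u n + 1)"
    unfolding E_def U_def x_def .
qed

end

lemma eventually_ge_real_of_at_top: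
  assumes "filterlim u at_top sequentially"
  shows "eventually (\<lambda>n. c \<le> real (u n)) sequentially"
proof -
  have "filterlim (\<lambda>n. real (u n)) at_top sequentially"
    using filterlim_compose[OF filterlim_real_sequentially assms] by simp
  then show ?thesis by (simp add: filterlim_at_top)
qed

lemma eventually_real_ge: "eventually (\<lambda>n. c \<le> real n) sequentially"
  using filterlim_real_sequentially by (simp add: filterlim_at_top)

lemma eventually_mult_le_of_ratio_to_0:
  assumes "(\<lambda>n. real (u n) / real n) \<longlonglongrightarrow> 0"
  shows "eventually (\<lambda>n. c * real (u n) \<le> real n) sequentially"
proof (cases "c \<le> 0")
  case True
  then show ?thesis by (intro always_eventually allI) (simp add: mult_nonpos_nonneg order_trans[of _ 0])
next
  case False
  then have c: "0 < c" by simp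
  have "eventually (\<lambda>n. real (u n) / real n < 1 / c) sequentially"
    using order_tendstoD(2)[OF assms] c by simp
  with eventually_real_ge[of 1] show ?thesis
  proof eventually_elim
    case (elim n)
    have n0: "0 < real n" using elim by simp
    have "real (u n) = (real (u n) / real n) * real n" using n0 by simp
    also have "\<dots> < (1 / c) * real n" using elim(2) n0 by (intro mult_strict_right_mono) auto
    finally have "c * real (u n) < real n" using c by (simp add: field_simps)
    then show ?case by linarith
  qed
qed

context tilt_asymptotics begin

lemma eventually_regime3:
  assumes u: "filterlim u at_top sequentially" and ratio: "(\<lambda>n. real (u n) / real n) \<longlonglongrightarrow> 0"
  shows "eventually (\<lambda>n. regime3 u n) sequentially"
  using eventually_ge_real_of_at_top[OF u, of 1] eventually_mult_le_of_ratio_to_0[OF ratio, of "4 * (1 + tau)"]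
    eventually_real_ge[of "8 * (real k + 1)"] eventually_real_ge[of Cb] eventually_mult_le_of_ratio_to_0[OF ratio, of "Cb * tau"]
    eventually_mult_le_of_ratio_to_0[OF ratio, of "Msum * tau"] eventually_mult_le_of_ratio_to_0[OF ratio, of "2 * Ka"]
    eventually_mult_le_of_ratio_to_0[OF ratio, of "real L * Cb * tau + Ka"] eventually_real_ge[of "16 * real k * Ka"]
    eventually_real_ge[of "4 * real k * E1"] eventually_mult_le_of_ratio_to_0[OF ratio, of "8 * real k"]
    eventually_real_ge[of "8 * (real k)\<^sup>2"] eventually_ge_real_of_at_top[OF u, of "4 * (real k)\<^sup>2"]
    eventually_ge_real_of_at_top[OF u, of "4 * real k * (real k + 1) / tau"] eventually_real_ge[of "2 * (real k)\<^sup>2"]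
    eventually_real_ge[of "4 / mu"] eventually_mult_le_of_ratio_to_0[OF ratio, of "4 * Bc / mu"]
proof eventually_elim
  case (elim n)
  have "4 * real k * (real (u n) + real k) = (8 * real k * real (u n)) / 2 + (8 * (real k)\<^sup>2) / 2"
    by (simp add: power2_eq_square algebra_simps)
  then have a: "4 * real k * (real (u n) + real k) \<le> real n" using elim(11,12) by linarith
  have b: "4 * real k * (real k + 1) \<le> tau * real (u n)" using elim(14) tau_pos by (simp add: divide_simps mult_ac)
  have c: "4 \<le> mu * real n" using elim(16) mu_pos by (simp add: divide_simps mult_ac)
  have d: "4 * Bc * real (u n) \<le> mu * real n" using elim(17) mu_pos by (simp add: divide_simps mult_ac)
  show ?case unfolding regime3_def regime2_def regime1_def regime0_def
    using elim a b c d by (simp add: mult_ac)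
qed

lemma mgf_asymptotics:
  assumes u: "filterlim u at_top sequentially" and ratio: "(\<lambda>n. real (u n) / real n) \<longlonglongrightarrow> 0"
  defines "E \<equiv> \<lambda>n. measure_pmf.expectation (chain k r u n (trials u n) (horizon u n)) (\<lambda>s. exp (lam * real_of_int (fst s)))"
  shows "\<exists>g. g \<in> O(\<lambda>n. max 1 (real (u n) ^ 2 / real n)) \<and>
    (\<forall>\<^sub>F n in sequentially. E n = exp (phi k r mu lam tau * real (u n) + g n))"
proof -
  define g where "g = (\<lambda>n. ln (E n) - phi k r mu lam tau * real (u n))"
  note ev = eventually_regime3[OF u ratio]
  have "\<forall>\<^sub>F n in sequentially. E n = exp (phi k r mu lam tau * real (u n) + g n)"
    using ev by eventually_elim (use log_mgf_close(1) in \<open>simp add: g_def E_def\<close>)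
  moreover have "g \<in> O(\<lambda>n. max 1 (real (u n) ^ 2 / real n))"
  proof (rule bigoI)
    show "\<forall>\<^sub>F n in sequentially. norm (g n) \<le> (2 * \<bar>Cfin\<bar>) * norm (max 1 (real (u n) ^ 2 / real n))"
      using ev
    proof eventually_elim
      case (elim n)
      have "real (u n) * ratio u n = real (u n) ^ 2 / real n" unfolding ratio_def by (simp add: power2_eq_square)
      then have "\<bar>g n\<bar> \<le> \<bar>Cfin\<bar> * (real (u n) ^ 2 / real n + 1)"
        using log_mgf_close(2)[OF elim] unfolding g_def E_def
        by (smt (verit) abs_ge_self divide_nonneg_nonneg mult_right_mono of_nat_0_le_iff zero_le_power2)
      also have "\<dots> \<le> \<bar>Cfin\<bar> * (2 * max 1 (real (u n) ^ 2 / real n))" by (intro mult_left_mono) auto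
      finally show ?case by (simp add: mult_ac)
    qed
  qed
  ultimately show ?thesis by blast
qed

end

theorem mainTheorem9:
  fixes k r :: nat and u :: "nat \<Rightarrow> nat" and \<mu> \<tau> lam :: real
  assumes "2 \<le> r" and "r \<le> k"
    and "filterlim u at_top sequentially"
    and "(\<lambda>n. real (u n) / real n) \<longlonglongrightarrow> 0"
    and "\<mu> > 0" and "\<tau> > 0"
  shows "\<exists>g. g \<in> O(\<lambda>n. max 1 (real (u n) ^ 2 / real n)) \<and>
    (\<forall>\<^sub>F n in sequentially.
       measure_pmf.expectation
         (chain k r u n (nat \<lfloor>\<mu> * real n ^ (r - 1) / real (u n) ^ (r - 2)\<rfloor>) (nat \<lfloor>\<tau> * real (u n)\<rfloor>))
         (\<lambda>s. exp (lam * real_of_int (fst s)))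
       = exp (phi k r \<mu> lam \<tau> * real (u n) + g n))"
proof -
  interpret tilt_asymptotics k r lam \<mu> \<tau> using assms by unfold_locales auto
  show ?thesis using mgf_asymptotics[OF assms(3,4)] unfolding trials_def horizon_def .
qed

end
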